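(* For every real $\varepsilon>0$ and every $n\ge1$, $\varepsilon\text{-}\operatorname{Proj}_{\mathbb{R}^n}$ is computable, i.e. it has a computable realizer.
   Context: Represented spaces: a representation of a set $X$ is a partial surjection $\delta_X:\subseteq\mathbb{N}^\mathbb{N}\to X$. For a partial multi-valued function $f:\subseteq X\rightrightarrows Y$, a realizer is a partial $F:\subseteq\mathbb{N}^\mathbb{N}\to\mathbb{N}^\mathbb{N}$ with $\delta_Y(F(p))\in f(\delta_X(p))$ for all $p$ with $\delta_X(p)\in\mathrm{dom}(f)$; $f$ is computable if it has a realizer computed by a Turing machine on infinite sequences. $\mathbb{R}^n$ has the Euclidean metric and the Cauchy representation (names are sequences $(q_i)$ in $\mathbb{Q}^n$ with $d(q_i,q_j)\le2^{-i}$ for $j\ge i$, naming the limit). Basic balls are open balls $B(c,r)$ with $c\in\mathbb{Q}^n$, $r$ a nonnegative rational. $\mathcal{A}(\mathbb{R}^n)$ (total information): a name of a closed set $A$ consists of an enumeration of basic balls whose union is $\mathbb{R}^n\setminus A$ together with an enumeration of exactly the basic balls meeting $A$. For $\varepsilon>0$, $\varepsilon\text{-}\operatorname{Proj}_{\mathbb{R}^n}:\subseteq\mathbb{R}^n\times\mathcal{A}(\mathbb{R}^n)\rightrightarrows\mathbb{R}^n$ maps $(x,A)$ with $A$ nonempty closed to the set of $y\in A$ with $d(x,y)\le(1+\varepsilon)\,d(x,A)$ ($\varepsilon$ is fixed, not part of the input). *)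

theory Defs
  imports "HOL-Analysis.Analysis" "HOL-Library.Nat_Bijection"
begin

datatype recf = Z | S | Id nat | Cn recf "recf list" | Pr recf recf | Mn recf

inductive rec_eval :: "recf \<Rightarrow> nat list \<Rightarrow> nat \<Rightarrow> bool" where
  ev_Z:  "rec_eval Z xs 0"
| ev_S:  "rec_eval S (x # xs) (Suc x)"
| ev_Id: "i < length xs \<Longrightarrow> rec_eval (Id i) xs (xs ! i)"
| ev_Cn: "list_all2 (\<lambda>g y. rec_eval g xs y) gs ys \<Longrightarrow> rec_eval f ys z \<Longrightarrow> rec_eval (Cn f gs) xs z"
| ev_Pr0: "rec_eval f xs z \<Longrightarrow> rec_eval (Pr f g) (0 # xs) z"
| ev_PrS: "rec_eval (Pr f g) (y # xs) r \<Longrightarrow> rec_eval g (y # r # xs) z \<Longrightarrow> rec_eval (Pr f g) (Suc y # xs) z"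
| ev_Mn: "rec_eval f (y # xs) 0 \<Longrightarrow> (\<forall>z<y. \<exists>v. 0 < v \<and> rec_eval f (z # xs) v) \<Longrightarrow> rec_eval (Mn f) xs y"

definition total_recursive :: "(nat \<Rightarrow> nat) \<Rightarrow> bool" where
  "total_recursive h \<longleftrightarrow> (\<exists>f. \<forall>x. rec_eval f [x] (h x))"

definition prefix_code :: "(nat \<Rightarrow> nat) \<Rightarrow> nat \<Rightarrow> nat" where
  "prefix_code p k = list_encode (map p [0..<k])"

text \<open>The total recursive word function h computes output q from input p:
  h(n, p|k) is either 0 (no answer yet) or Suc (q n), and eventually Suc (q n).
  This is the standard characterisation of functions computed by Type-2 machines.\<close>
definition computes_on :: "(nat \<Rightarrow> nat) \<Rightarrow> (nat \<Rightarrow> nat) \<Rightarrow> (nat \<Rightarrow> nat) \<Rightarrow> bool" where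
  "computes_on h p q \<longleftrightarrow>
     (\<forall>n. (\<exists>k. h (prod_encode (n, prefix_code p k)) = Suc (q n)) \<and>
          (\<forall>k. h (prod_encode (n, prefix_code p k)) \<in> {0, Suc (q n)}))"

text \<open>Representations are given as naming relations delta p x ("p is a name of x").
  A partial multi-valued f with domain D is computable iff it has a computable realizer.\<close>
definition computable_mv ::
  "((nat \<Rightarrow> nat) \<Rightarrow> 'a \<Rightarrow> bool) \<Rightarrow> ((nat \<Rightarrow> nat) \<Rightarrow> 'b \<Rightarrow> bool) \<Rightarrow> 'a set \<Rightarrow> ('a \<Rightarrow> 'b set) \<Rightarrow> bool" where
  "computable_mv \<delta>X \<delta>Y D f \<longleftrightarrow>
     (\<exists>h. total_recursive h \<and>
        (\<forall>p x. \<delta>X p x \<and> x \<in> D \<longrightarrow> (\<exists>q y. computes_on h p q \<and> \<delta>Y q y \<and> y \<in> f x)))"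

definition pair_rep :: "((nat \<Rightarrow> nat) \<Rightarrow> 'a \<Rightarrow> bool) \<Rightarrow> ((nat \<Rightarrow> nat) \<Rightarrow> 'b \<Rightarrow> bool) \<Rightarrow> (nat \<Rightarrow> nat) \<Rightarrow> 'a \<times> 'b \<Rightarrow> bool" where
  "pair_rep \<delta>1 \<delta>2 p xy \<longleftrightarrow> \<delta>1 (\<lambda>i. p (2 * i)) (fst xy) \<and> \<delta>2 (\<lambda>i. p (2 * i + 1)) (snd xy)"

definition rat_code :: "nat \<Rightarrow> rat" where
  "rat_code k = (case prod_decode k of (a, b) \<Rightarrow> Fract (int_decode a) (int b))"

definition coord_idx :: "'n::finite \<Rightarrow> nat" where
  "coord_idx = (SOME f. bij_betw f (UNIV :: 'n set) {..<CARD('n)})"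

definition qvec :: "nat \<Rightarrow> real ^ 'n::finite" where
  "qvec k = (\<chi> j. let l = list_decode k in
                   of_rat (rat_code (if coord_idx j < length l then l ! coord_idx j else 0)))"

definition basic_ball :: "nat \<Rightarrow> (real ^ 'n::finite) set" where
  "basic_ball k = (case prod_decode k of (a, b) \<Rightarrow> ball (qvec a) \<bar>of_rat (rat_code b)\<bar>)"

definition enumerated :: "(nat \<Rightarrow> nat) \<Rightarrow> nat set" where
  "enumerated p = {k. \<exists>i. p i = Suc k}"

definition cauchy_rep :: "(nat \<Rightarrow> nat) \<Rightarrow> real ^ 'n::finite \<Rightarrow> bool" where
  "cauchy_rep p x \<longleftrightarrow>
     (\<forall>i j. i \<le> j \<longrightarrow> dist (qvec (p i) :: real ^ 'n) (qvec (p j)) \<le> (1/2) ^ i) \<and>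
     ((\<lambda>i. qvec (p i) :: real ^ 'n) \<longlonglongrightarrow> x)"

definition closed_rep :: "(nat \<Rightarrow> nat) \<Rightarrow> (real ^ 'n::finite) set \<Rightarrow> bool" where
  "closed_rep p A \<longleftrightarrow> closed A \<and>
     (\<Union>k \<in> enumerated (\<lambda>i. p (2 * i)). basic_ball k) = - A \<and>
     enumerated (\<lambda>i. p (2 * i + 1)) = {k. basic_ball k \<inter> A \<noteq> {}}"

definition eps_proj :: "real \<Rightarrow> (real ^ 'n::finite) \<times> (real ^ 'n) set \<Rightarrow> (real ^ 'n) set" where
  "eps_proj \<epsilon> xA = {y \<in> snd xA. dist (fst xA) y \<le> (1 + \<epsilon>) * infdist (fst xA) (snd xA)}"

definition eps_proj_dom :: "((real ^ 'n::finite) \<times> (real ^ 'n) set) set" where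
  "eps_proj_dom = {xA. closed (snd xA) \<and> snd xA \<noteq> {}}"

end

theory Submission
  imports Defs
begin

text \<open>The realizer builds a nested sequence of basic balls \<open>B\<^sub>0 \<supseteq> B\<^sub>1 \<supseteq> \<dots>\<close>, each meeting
  \<open>A\<close> and with radius at most \<open>2\<^sup>-\<^sup>m\<close>; their centres name a point \<open>y \<in> A\<close>. The invariant is that
  \<open>B\<^sub>m\<close> contains a point \<open>a \<in> A\<close> with \<open>d(x,a) < (1 + 1/Q) d(x,A)\<close>, or contains \<open>x\<close> itself when
  \<open>x \<in> A\<close>; it forces \<open>d(x,y) \<le> (1 + 1/Q) d(x,A)\<close>. Since \<open>x \<in> A\<close> is undecidable, stage \<open>m+1\<close>
  searches for one of two kinds of certificate for the next ball \<open>B\<close>, whichever shows up first.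
  A far certificate proves a rational lower bound \<open>s \<le> d(x,A)\<close> (a finite grid of points around \<open>x\<close>
  is covered by balls from the negative information) and puts \<open>B\<close> within \<open>(1 + 1/Q) s\<close> of \<open>x\<close>.
  A near certificate places \<open>x\<close> deep inside \<open>B\<close> and finds a ball of the positive information
  so close to \<open>x\<close> that \<open>d(x,A)\<close> is small compared with the radius of \<open>B\<close>, so that a nearest
  point of \<open>A\<close> lies in \<open>B\<close>. One of the two kinds always exists, and checking a certificate reads_le
  rational arithmetic and finitely many entries of the input only, so the search is recursive.\<close>

section \<open>Mu-recursive functions of several arguments\<close>

definition mu_computable :: "nat \<Rightarrow> (nat list \<Rightarrow> nat) \<Rightarrow> bool" where
  "mu_computable k g \<longleftrightarrow> (\<exists>f. \<forall>xs. length xs = k \<longrightarrow> rec_eval f xs (g xs))"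

lemma mu_computable_cong:
  "mu_computable k g \<Longrightarrow> (\<And>xs. length xs = k \<Longrightarrow> g xs = h xs) \<Longrightarrow> mu_computable k h"
  unfolding mu_computable_def by (elim exE) (rule exI, auto)

lemma mu_computable_Z: "mu_computable k (\<lambda>_. 0)"
  unfolding mu_computable_def by (metis rec_eval.ev_Z)

lemma mu_computable_Id: "i < k \<Longrightarrow> mu_computable k (\<lambda>xs. xs ! i)"
  unfolding mu_computable_def by (metis rec_eval.ev_Id)

lemma mu_computable_S: "mu_computable 1 (\<lambda>xs. Suc (hd xs))"
  unfolding mu_computable_def
proof (intro exI allI impI)
  fix xs :: "nat list" assume "length xs = 1"
  then obtain x where "xs = [x]" by (cases xs) auto
  then show "rec_eval S xs (Suc (hd xs))" by (simp add: rec_eval.ev_S)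
qed

lemma list_all2_ex:
  "\<forall>g\<in>set gs. \<exists>G. P G g \<Longrightarrow> \<exists>Gs. list_all2 P Gs gs"
proof (induction gs)
  case Nil then show ?case by auto
next
  case (Cons g gs)
  then obtain G Gs where "P G g" "list_all2 P Gs gs" by auto
  then show ?case by (intro exI[of _ "G # Gs"]) auto
qed

lemma mu_computable_Cn:
  assumes f: "mu_computable (length gs) f" and gs: "\<forall>g\<in>set gs. mu_computable k g"
  shows "mu_computable k (\<lambda>xs. f (map (\<lambda>g. g xs) gs))"
proof -
  obtain F where F: "\<forall>ys. length ys = length gs \<longrightarrow> rec_eval F ys (f ys)" using f mu_computable_def by metis
  obtain Gs where Gs: "list_all2 (\<lambda>G g. \<forall>xs. length xs = k \<longrightarrow> rec_eval G xs (g xs)) Gs gs"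
    using list_all2_ex[of gs "\<lambda>G g. \<forall>xs. length xs = k \<longrightarrow> rec_eval G xs (g xs)"] gs
    unfolding mu_computable_def by blast
  show ?thesis unfolding mu_computable_def
  proof (intro exI allI impI)
    fix xs :: "nat list" assume xs: "length xs = k"
    have "list_all2 (\<lambda>G y. rec_eval G xs y) Gs (map (\<lambda>g. g xs) gs)"
      using Gs xs by (auto simp: list_all2_map2 elim!: list_all2_mono)
    then show "rec_eval (Cn F Gs) xs (f (map (\<lambda>g. g xs) gs))"
      using F by (intro rec_eval.ev_Cn) auto
  qed
qed

lemma mu_computable_Pr:
  assumes f: "mu_computable k f" and g: "mu_computable (Suc (Suc k)) g"
  shows "mu_computable (Suc k) (\<lambda>xs. rec_nat (f (tl xs)) (\<lambda>y r. g (y # r # tl xs)) (hd xs))"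
proof -
  obtain F where F: "\<forall>ys. length ys = k \<longrightarrow> rec_eval F ys (f ys)" using f mu_computable_def by metis
  obtain G where G: "\<forall>ys. length ys = Suc (Suc k) \<longrightarrow> rec_eval G ys (g ys)" using g mu_computable_def by metis
  have *: "rec_eval (Pr F G) (y # zs) (rec_nat (f zs) (\<lambda>y r. g (y # r # zs)) y)" if "length zs = k" for y zs
  proof (induction y)
    case 0 then show ?case using F that by (simp add: rec_eval.ev_Pr0)
  next
    case (Suc y) then show ?case using G that by (auto intro: rec_eval.ev_PrS)
  qed
  show ?thesis unfolding mu_computable_def
  proof (intro exI allI impI)
    fix xs :: "nat list" assume "length xs = Suc k"
    then obtain y zs where "xs = y # zs" "length zs = k" by (cases xs) auto
    then show "rec_eval (Pr F G) xs (rec_nat (f (tl xs)) (\<lambda>y r. g (y # r # tl xs)) (hd xs))"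
      using * by simp
  qed
qed

lemma mu_computable_Mn:
  assumes f: "mu_computable (Suc k) f" and ex: "\<And>xs. length xs = k \<Longrightarrow> \<exists>y. f (y # xs) = 0"
  shows "mu_computable k (\<lambda>xs. LEAST y. f (y # xs) = 0)"
proof -
  obtain F where F: "\<forall>ys. length ys = Suc k \<longrightarrow> rec_eval F ys (f ys)" using f mu_computable_def by metis
  show ?thesis unfolding mu_computable_def
  proof (intro exI allI impI)
    fix xs :: "nat list" assume xs: "length xs = k"
    let ?y = "LEAST y. f (y # xs) = 0"
    have f0: "f (?y # xs) = 0" using ex[OF xs] by (rule LeastI_ex)
    have "rec_eval F (?y # xs) 0" using F xs f0 by (metis length_Cons)
    moreover have "\<forall>z<?y. \<exists>v. 0 < v \<and> rec_eval F (z # xs) v"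
    proof (intro allI impI)
      fix z assume "z < ?y"
      then have "f (z # xs) \<noteq> 0" by (rule not_less_Least)
      moreover have "rec_eval F (z # xs) (f (z # xs))" using F xs by simp
      ultimately show "\<exists>v. 0 < v \<and> rec_eval F (z # xs) v" by blast
    qed
    ultimately show "rec_eval (Mn F) xs ?y" by (intro rec_eval.ev_Mn)
  qed
qed

lemma length_2E:
  "length xs = 2 \<Longrightarrow> (\<And>a b. xs = [a, b] \<Longrightarrow> P) \<Longrightarrow> P"
  by (cases xs; cases "tl xs") (auto simp: numeral_2_eq_2)

lemma length_1E:
  "length xs = 1 \<Longrightarrow> (\<And>a. xs = [a] \<Longrightarrow> P) \<Longrightarrow> P"
  by (cases xs) auto

lemma mu_computable_comp1:
  "mu_computable 1 f \<Longrightarrow> mu_computable k g \<Longrightarrow> mu_computable k (\<lambda>xs. f [g xs])"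
  using mu_computable_Cn[of "[g]" f k] by simp

lemma mu_computable_comp2:
  "mu_computable 2 f \<Longrightarrow> mu_computable k g \<Longrightarrow> mu_computable k h \<Longrightarrow> mu_computable k (\<lambda>xs. f [g xs, h xs])"
  using mu_computable_Cn[of "[g, h]" f k] by (simp add: numeral_2_eq_2)

lemma mu_computable_Suc:
  "mu_computable k g \<Longrightarrow> mu_computable k (\<lambda>xs. Suc (g xs))"
  using mu_computable_comp1[OF mu_computable_S] by simp

lemma mu_computable_add: "mu_computable 2 (\<lambda>xs. xs ! 0 + xs ! 1)"
proof -
  have "mu_computable 2 (\<lambda>xs. rec_nat (tl xs ! 0) (\<lambda>y r. Suc r) (hd xs))"
    using mu_computable_Pr[of 1 "\<lambda>xs. xs ! 0" "\<lambda>xs. Suc (xs ! 1)"] mu_computable_Id mu_computable_Suc[of 3 "\<lambda>xs. xs ! 1"]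
    by (simp add: numeral_2_eq_2 numeral_3_eq_3)
  then show ?thesis
  proof (rule mu_computable_cong)
    fix xs :: "nat list" assume "length xs = 2"
    then obtain a b where "xs = [a, b]" by (rule length_2E)
    then show "rec_nat (tl xs ! 0) (\<lambda>y r. Suc r) (hd xs) = xs ! 0 + xs ! 1"
      by (induction a arbitrary: xs) auto
  qed
qed

lemma mu_computable_const: "mu_computable k (\<lambda>_. c)"
  by (induction c) (auto intro: mu_computable_Z mu_computable_Suc)

lemma mu_computable_pred: "mu_computable 1 (\<lambda>xs. xs ! 0 - 1)"
proof -
  have "mu_computable 1 (\<lambda>xs. rec_nat 0 (\<lambda>y r. y) (hd xs))"
    using mu_computable_Pr[of 0 "\<lambda>_. 0" "\<lambda>xs. xs ! 0"] mu_computable_Z mu_computable_Id[of 0 2] by (simp add: numeral_2_eq_2)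
  then show ?thesis
    by (rule mu_computable_cong) (erule length_1E, case_tac a, auto)
qed

lemma mu_computable_monus: "mu_computable 2 (\<lambda>xs. xs ! 1 - xs ! 0)"
proof -
  have "mu_computable 2 (\<lambda>xs. rec_nat (tl xs ! 0) (\<lambda>y r. r - 1) (hd xs))"
    using mu_computable_Pr[of 1 "\<lambda>xs. xs ! 0" "\<lambda>xs. xs ! 1 - 1"] mu_computable_Id
      mu_computable_comp1[OF mu_computable_pred, of 3 "\<lambda>xs. xs ! 1"]
    by (simp add: numeral_2_eq_2 numeral_3_eq_3)
  then show ?thesis
  proof (rule mu_computable_cong)
    fix xs :: "nat list" assume "length xs = 2"
    then obtain a b where "xs = [a, b]" by (rule length_2E)
    then show "rec_nat (tl xs ! 0) (\<lambda>y r. r - 1) (hd xs) = xs ! 1 - xs ! 0"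
      by (induction a arbitrary: xs) auto
  qed
qed

lemma mu_computable_mult: "mu_computable 2 (\<lambda>xs. xs ! 0 * xs ! 1)"
proof -
  have "mu_computable 2 (\<lambda>xs. rec_nat 0 (\<lambda>y r. r + tl xs ! 0) (hd xs))"
    using mu_computable_Pr[of 1 "\<lambda>xs. 0" "\<lambda>xs. xs ! 1 + xs ! 2"] mu_computable_Z
      mu_computable_comp2[OF mu_computable_add, of 3 "\<lambda>xs. xs ! 1" "\<lambda>xs. xs ! 2"] mu_computable_Id
    by (simp add: numeral_2_eq_2 numeral_3_eq_3)
  then show ?thesis
  proof (rule mu_computable_cong)
    fix xs :: "nat list" assume "length xs = 2"
    then obtain a b where "xs = [a, b]" by (rule length_2E)
    then show "rec_nat 0 (\<lambda>y r. r + tl xs ! 0) (hd xs) = xs ! 0 * xs ! 1"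
      by (induction a arbitrary: xs) auto
  qed
qed

lemma mu_computable_triangle: "mu_computable 1 (\<lambda>xs. triangle (xs ! 0))"
proof -
  have "mu_computable 1 (\<lambda>xs. rec_nat 0 (\<lambda>y r. r + Suc y) (hd xs))"
    using mu_computable_Pr[of 0 "\<lambda>xs. 0" "\<lambda>xs. xs ! 1 + Suc (xs ! 0)"] mu_computable_Z
      mu_computable_comp2[OF mu_computable_add, of 2 "\<lambda>xs. xs ! 1" "\<lambda>xs. Suc (xs ! 0)"] mu_computable_Id mu_computable_Suc
    by (simp add: numeral_2_eq_2)
  then show ?thesis
  proof (rule mu_computable_cong)
    fix xs :: "nat list" assume "length xs = 1"
    then obtain a where "xs = [a]" by (rule length_1E)
    then show "rec_nat 0 (\<lambda>y r. r + Suc y) (hd xs) = triangle (xs ! 0)"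
      by (induction a arbitrary: xs) auto
  qed
qed

lemma mu_computable_prod_encode: "mu_computable 2 (\<lambda>xs. prod_encode (xs ! 0, xs ! 1))"
proof -
  have "mu_computable 2 (\<lambda>xs. triangle (xs ! 0 + xs ! 1) + xs ! 0)"
    using mu_computable_comp2[OF mu_computable_add, of 2 "\<lambda>xs. triangle (xs ! 0 + xs ! 1)" "\<lambda>xs. xs ! 0"]
      mu_computable_comp1[OF mu_computable_triangle mu_computable_add] mu_computable_Id[of 0 2] by simp
  then show ?thesis by (simp add: prod_encode_def)
qed

abbreviation pfst :: "nat \<Rightarrow> nat" where "pfst z \<equiv> fst (prod_decode z)"
abbreviation psnd :: "nat \<Rightarrow> nat" where "psnd z \<equiv> snd (prod_decode z)"

definition tri_root :: "nat \<Rightarrow> nat" where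
  "tri_root n = (LEAST k. Suc n - triangle (Suc k) = 0)"

lemma tri_root_ex: "\<exists>k. Suc n - triangle (Suc k) = 0"
proof -
  show ?thesis by (rule exI[of _ n]) simp
qed

lemma tri_root: "triangle (tri_root n) \<le> n \<and> n < triangle (Suc (tri_root n))"
proof -
  let ?K = "tri_root n"
  have 1: "Suc n - triangle (Suc ?K) = 0" unfolding tri_root_def using tri_root_ex by (rule LeastI_ex)
  have 2: "triangle ?K \<le> n"
  proof (cases ?K)
    case 0 then show ?thesis by simp
  next
    case (Suc j)
    then have "j < ?K" by simp
    then have "Suc n - triangle (Suc j) \<noteq> 0" unfolding tri_root_def by (rule not_less_Least)
    then show ?thesis using Suc by simp
  qed
  show ?thesis using 1 2 by simp
qed

lemma prod_decode_tri_root: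
  "prod_decode n = (n - triangle (tri_root n), tri_root n - (n - triangle (tri_root n)))"
proof -
  let ?K = "tri_root n" let ?m = "n - triangle ?K"
  have "n = triangle ?K + ?m" "?m \<le> ?K" using tri_root[of n] by auto
  then have "prod_decode n = prod_decode_aux ?K ?m" by (metis prod_decode_triangle_add)
  also have "\<dots> = (?m, ?K - ?m)" using \<open>?m \<le> ?K\<close> by (simp add: prod_decode_aux.simps)
  finally show ?thesis .
qed

lemma mu_computable_tri_root: "mu_computable 1 (\<lambda>xs. tri_root (xs ! 0))"
proof -
  have "mu_computable 2 (\<lambda>xs. Suc (xs ! 1) - triangle (Suc (xs ! 0)))"
    using mu_computable_comp2[OF mu_computable_monus, of 2 "\<lambda>xs. triangle (Suc (xs ! 0))" "\<lambda>xs. Suc (xs ! 1)"]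
      mu_computable_comp1[OF mu_computable_triangle, of 2 "\<lambda>xs. Suc (xs ! 0)"] mu_computable_Suc mu_computable_Id by simp
  then have "mu_computable (Suc 1) (\<lambda>xs. Suc (xs ! 1) - triangle (Suc (xs ! 0)))" by (simp only: Suc_1)
  then have "mu_computable 1 (\<lambda>xs. LEAST y. Suc ((y # xs) ! 1) - triangle (Suc ((y # xs) ! 0)) = 0)"
    by (rule mu_computable_Mn) (metis tri_root_ex nth_Cons_0 nth_Cons_Suc One_nat_def)
  then show ?thesis by (rule mu_computable_cong) (auto simp: tri_root_def elim!: length_1E)
qed

lemma mu_computable_pfst: "mu_computable 1 (\<lambda>xs. pfst (xs ! 0))"
proof -
  have "mu_computable 1 (\<lambda>xs. xs ! 0 - triangle (tri_root (xs ! 0)))"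
    using mu_computable_comp2[OF mu_computable_monus, of 1 "\<lambda>xs. triangle (tri_root (xs ! 0))" "\<lambda>xs. xs ! 0"]
      mu_computable_comp1[OF mu_computable_triangle mu_computable_tri_root] mu_computable_Id[of 0 1] by simp
  then show ?thesis by (simp add: prod_decode_tri_root)
qed

lemma mu_computable_psnd: "mu_computable 1 (\<lambda>xs. psnd (xs ! 0))"
proof -
  have "mu_computable 1 (\<lambda>xs. tri_root (xs ! 0) - pfst (xs ! 0))"
    using mu_computable_comp2[OF mu_computable_monus, of 1 "\<lambda>xs. pfst (xs ! 0)" "\<lambda>xs. tri_root (xs ! 0)"]
      mu_computable_pfst mu_computable_tri_root by simp
  then show ?thesis
    by (rule mu_computable_cong) (metis prod_decode_tri_root snd_conv fst_conv)
qed

named_theorems total_recursive_intros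

lemma total_recursive_iff:
  "total_recursive g \<longleftrightarrow> mu_computable 1 (\<lambda>xs. g (xs ! 0))"
  unfolding mu_computable_def total_recursive_def
  by (metis length_0_conv length_Suc_conv nth_Cons_0 One_nat_def)

lemma total_recursive_mu_computable:
  "total_recursive g \<Longrightarrow> mu_computable k h \<Longrightarrow> mu_computable k (\<lambda>xs. g (h xs))"
  unfolding total_recursive_iff using mu_computable_comp1 by fastforce

lemma total_recursive_mu_comp1:
  "mu_computable 1 f \<Longrightarrow> total_recursive g \<Longrightarrow> total_recursive (\<lambda>x. f [g x])"
  unfolding total_recursive_iff using mu_computable_comp1 by fastforce

lemma total_recursive_mu_comp2:
  "mu_computable 2 f \<Longrightarrow> total_recursive g \<Longrightarrow> total_recursive h \<Longrightarrow> total_recursive (\<lambda>x. f [g x, h x])"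
  unfolding total_recursive_iff using mu_computable_comp2 by fastforce

lemma total_recursive_id [total_recursive_intros]: "total_recursive (\<lambda>x. x)"
  unfolding total_recursive_iff using mu_computable_Id[of 0 1] by simp

lemma total_recursive_const [total_recursive_intros]: "total_recursive (\<lambda>x. c)"
  unfolding total_recursive_iff using mu_computable_const by simp

lemma total_recursive_Suc [total_recursive_intros]:
  "total_recursive g \<Longrightarrow> total_recursive (\<lambda>x. Suc (g x))"
  unfolding total_recursive_iff using mu_computable_Suc by fastforce

lemma total_recursive_add [total_recursive_intros]:
  "total_recursive g \<Longrightarrow> total_recursive h \<Longrightarrow> total_recursive (\<lambda>x. g x + h x)"
  using total_recursive_mu_comp2[OF mu_computable_add] by fastforce

lemma total_recursive_sub [total_recursive_intros]:
  "total_recursive g \<Longrightarrow> total_recursive h \<Longrightarrow> total_recursive (\<lambda>x. g x - h x)"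
  using total_recursive_mu_comp2[OF mu_computable_monus, of h g] by fastforce

lemma total_recursive_mult [total_recursive_intros]:
  "total_recursive g \<Longrightarrow> total_recursive h \<Longrightarrow> total_recursive (\<lambda>x. g x * h x)"
  using total_recursive_mu_comp2[OF mu_computable_mult] by fastforce

lemma total_recursive_pair [total_recursive_intros]:
  "total_recursive g \<Longrightarrow> total_recursive h \<Longrightarrow> total_recursive (\<lambda>x. prod_encode (g x, h x))"
  using total_recursive_mu_comp2[OF mu_computable_prod_encode] by fastforce

lemma total_recursive_pfst [total_recursive_intros]:
  "total_recursive g \<Longrightarrow> total_recursive (\<lambda>x. pfst (g x))"
  using total_recursive_mu_comp1[OF mu_computable_pfst] by fastforce

lemma total_recursive_psnd [total_recursive_intros]:
  "total_recursive g \<Longrightarrow> total_recursive (\<lambda>x. psnd (g x))"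
  using total_recursive_mu_comp1[OF mu_computable_psnd] by fastforce

lemma total_recursive_comp:
  "total_recursive f \<Longrightarrow> total_recursive g \<Longrightarrow> total_recursive (\<lambda>x. f (g x))"
  unfolding total_recursive_iff by (drule mu_computable_comp1[of _ 1 "\<lambda>xs. g (xs ! 0)"]) auto

lemma total_recursive_rec_nat [total_recursive_intros]:
  assumes a: "total_recursive a" and b: "total_recursive b"
    and G: "total_recursive (\<lambda>z. G (pfst z) (pfst (psnd z)) (psnd (psnd z)))"
  shows "total_recursive (\<lambda>x. rec_nat (a x) (G x) (b x))"
proof -
  let ?G3 = "\<lambda>z. G (pfst z) (pfst (psnd z)) (psnd (psnd z))"
  have p3: "mu_computable 3 (\<lambda>xs. prod_encode (xs ! 2, prod_encode (xs ! 0, xs ! 1)))"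
    using mu_computable_comp2[OF mu_computable_prod_encode, of 3 "\<lambda>xs. xs ! 2" "\<lambda>xs. prod_encode (xs ! 0, xs ! 1)"]
      mu_computable_comp2[OF mu_computable_prod_encode, of 3 "\<lambda>xs. xs ! 0" "\<lambda>xs. xs ! 1"] mu_computable_Id by simp
  have g: "mu_computable (Suc (Suc 1)) (\<lambda>xs. ?G3 (prod_encode (xs ! 2, prod_encode (xs ! 0, xs ! 1))))"
    using total_recursive_mu_computable[OF G p3] by (simp add: numeral_3_eq_3)
  have f: "mu_computable 1 (\<lambda>xs. a (xs ! 0))" using a total_recursive_iff by blast
  have "mu_computable (Suc 1) (\<lambda>xs. rec_nat (a (tl xs ! 0)) (\<lambda>y r. ?G3 (prod_encode ((y # r # tl xs) ! 2, prod_encode ((y # r # tl xs) ! 0, (y # r # tl xs) ! 1)))) (hd xs))"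
    using mu_computable_Pr[OF f g] by simp
  then have P: "mu_computable (Suc 1) (\<lambda>xs. rec_nat (a (xs ! 1)) (G (xs ! 1)) (xs ! 0))"
    by (rule mu_computable_cong) (auto simp: length_Suc_conv)
  then have P: "mu_computable 2 (\<lambda>xs. rec_nat (a (xs ! 1)) (G (xs ! 1)) (xs ! 0))"
    by (simp only: Suc_1)
  have "total_recursive (\<lambda>x. (\<lambda>xs. rec_nat (a (xs ! 1)) (G (xs ! 1)) (xs ! 0)) [b x, x])"
    by (rule total_recursive_mu_comp2[OF P b total_recursive_id])
  then show ?thesis by simp
qed

definition decidable :: "(nat \<Rightarrow> bool) \<Rightarrow> bool" where
  "decidable P \<longleftrightarrow> total_recursive (\<lambda>x. if P x then 1 else 0)"

lemma total_recursive_if [total_recursive_intros]: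
  "decidable P \<Longrightarrow> total_recursive g \<Longrightarrow> total_recursive h \<Longrightarrow> total_recursive (\<lambda>x. if P x then g x else h x)"
proof -
  assume "decidable P" "total_recursive g" "total_recursive h"
  then have "total_recursive (\<lambda>x. (if P x then 1 else 0) * g x + (1 - (if P x then 1 else 0)) * h x)"
    unfolding decidable_def by (intro total_recursive_add total_recursive_mult total_recursive_sub total_recursive_const)
  then show ?thesis by (rule back_subst[of total_recursive]) auto
qed

lemma decidable_le [total_recursive_intros]:
  "total_recursive g \<Longrightarrow> total_recursive h \<Longrightarrow> decidable (\<lambda>x. g x \<le> h x)"
proof -
  assume "total_recursive g" "total_recursive h"
  then have "total_recursive (\<lambda>x. 1 - (g x - h x))" by (intro total_recursive_sub total_recursive_const)
  then show ?thesis unfolding decidable_def by (rule back_subst[of total_recursive]) auto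
qed

lemma decidable_not [total_recursive_intros]:
  "decidable P \<Longrightarrow> decidable (\<lambda>x. \<not> P x)"
proof -
  assume "decidable P"
  then have "total_recursive (\<lambda>x. 1 - (if P x then 1 else 0))" unfolding decidable_def by (intro total_recursive_sub total_recursive_const)
  then show ?thesis unfolding decidable_def by (rule back_subst[of total_recursive]) auto
qed

lemma decidable_and [total_recursive_intros]:
  "decidable P \<Longrightarrow> decidable Q \<Longrightarrow> decidable (\<lambda>x. P x \<and> Q x)"
proof -
  assume "decidable P" "decidable Q"
  then have "total_recursive (\<lambda>x. (if P x then 1 else 0) * (if Q x then 1 else 0))" unfolding decidable_def by (intro total_recursive_mult)
  then show ?thesis unfolding decidable_def by (rule back_subst[of total_recursive]) auto
qed

lemma decidable_or [total_recursive_intros]: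
  "decidable P \<Longrightarrow> decidable Q \<Longrightarrow> decidable (\<lambda>x. P x \<or> Q x)"
proof -
  assume "decidable P" "decidable Q"
  then have "decidable (\<lambda>x. \<not> (\<not> P x \<and> \<not> Q x))" by (intro decidable_not decidable_and)
  then show ?thesis by simp
qed

lemma decidable_imp [total_recursive_intros]:
  "decidable P \<Longrightarrow> decidable Q \<Longrightarrow> decidable (\<lambda>x. P x \<longrightarrow> Q x)"
proof -
  assume "decidable P" "decidable Q"
  then have "decidable (\<lambda>x. \<not> P x \<or> Q x)" by (intro decidable_not decidable_or)
  then show ?thesis by simp
qed

lemma decidable_less [total_recursive_intros]:
  "total_recursive g \<Longrightarrow> total_recursive h \<Longrightarrow> decidable (\<lambda>x. g x < h x)"
proof -
  assume "total_recursive g" "total_recursive h"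
  then have "decidable (\<lambda>x. \<not> h x \<le> g x)" by (intro decidable_not decidable_le)
  then show ?thesis by (simp add: not_le)
qed

lemma decidable_eq [total_recursive_intros]:
  "total_recursive g \<Longrightarrow> total_recursive h \<Longrightarrow> decidable (\<lambda>x. g x = h x)"
proof -
  assume "total_recursive g" "total_recursive h"
  then have "decidable (\<lambda>x. g x \<le> h x \<and> h x \<le> g x)" by (intro decidable_and decidable_le)
  then show ?thesis by (simp add: eq_iff)
qed

lemma total_recursive_comp2:
  "total_recursive (\<lambda>z. F (pfst z) (psnd z)) \<Longrightarrow> total_recursive g \<Longrightarrow> total_recursive h \<Longrightarrow> total_recursive (\<lambda>x. F (g x) (h x))"
  using total_recursive_comp[of "\<lambda>z. F (pfst z) (psnd z)" "\<lambda>x. prod_encode (g x, h x)"] total_recursive_pair by simp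

lemma decidable_if [total_recursive_intros]:
  "decidable C \<Longrightarrow> decidable P \<Longrightarrow> decidable R \<Longrightarrow> decidable (\<lambda>x. if C x then P x else R x)"
proof -
  assume "decidable C" "decidable P" "decidable R"
  then have "decidable (\<lambda>x. (C x \<longrightarrow> P x) \<and> (\<not> C x \<longrightarrow> R x))" by (intro total_recursive_intros)
  then show ?thesis by (rule back_subst[of decidable]) auto
qed

lemma decidable_comp:
  "decidable P \<Longrightarrow> total_recursive g \<Longrightarrow> decidable (\<lambda>x. P (g x))"
  unfolding decidable_def using total_recursive_comp[of "\<lambda>x. if P x then 1 else 0" g] by simp

lemma decidable_comp2:
  "decidable (\<lambda>z. P (pfst z) (psnd z)) \<Longrightarrow> total_recursive g \<Longrightarrow> total_recursive h \<Longrightarrow> decidable (\<lambda>x. P (g x) (h x))"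
  using decidable_comp[of "\<lambda>z. P (pfst z) (psnd z)" "\<lambda>x. prod_encode (g x, h x)"] total_recursive_pair by simp

lemma decidable_bex [total_recursive_intros]:
  assumes P: "decidable (\<lambda>z. P (pfst z) (psnd z))" and b: "total_recursive b"
  shows "decidable (\<lambda>x. \<exists>i<b x. P x i)"
proof -
  have R: "total_recursive (\<lambda>x. rec_nat 0 (\<lambda>i r. if P x i then 1 else r) (b x))"
  proof (rule total_recursive_rec_nat[OF total_recursive_const b])
    show "total_recursive (\<lambda>z. if P (pfst z) (pfst (psnd z)) then 1 else psnd (psnd z))"
      by (intro total_recursive_if total_recursive_const total_recursive_psnd total_recursive_id decidable_comp2[OF P] total_recursive_pfst)
  qed
  have "rec_nat 0 (\<lambda>i r. if P x i then 1 else r) n = (if \<exists>i<n. P x i then 1 else 0)" for x n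
    by (induction n) (auto simp: less_Suc_eq)
  then have eq: "(\<lambda>x. rec_nat 0 (\<lambda>i r. if P x i then 1 else r) (b x)) = (\<lambda>x. if \<exists>i<b x. P x i then 1 else 0)"
    by (intro ext) blast
  show ?thesis unfolding decidable_def by (subst eq[symmetric]) (rule R)
qed

lemma decidable_ball [total_recursive_intros]:
  assumes P: "decidable (\<lambda>z. P (pfst z) (psnd z))" and b: "total_recursive b"
  shows "decidable (\<lambda>x. \<forall>i<b x. P x i)"
proof -
  have "decidable (\<lambda>z. \<not> P (pfst z) (psnd z))" using P by (rule decidable_not)
  then have "decidable (\<lambda>x. \<not> (\<exists>i<b x. \<not> P x i))" using b by (rule decidable_not[OF decidable_bex])
  then show ?thesis by simp
qed

lemma div_eq_rec_nat:
  "x div d = (if d = 0 then 0 else rec_nat 0 (\<lambda>q r. if Suc q * d \<le> x then Suc r else r) x)"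
proof (cases "d = 0")
  case False
  have "rec_nat 0 (\<lambda>q r. if Suc q * d \<le> x then Suc r else r) n = min n (x div d)" for n
  proof (induction n)
    case (Suc n)
    have "Suc n * d \<le> x \<longleftrightarrow> n < x div d" using False
      by (metis less_eq_div_iff_mult_less_eq mult.commute not_gr_zero Suc_le_eq)
    then show ?case using Suc by auto
  qed simp
  then show ?thesis using False by (simp add: min_absorb2 div_le_dividend)
qed simp

lemma total_recursive_div [total_recursive_intros]:
  "total_recursive g \<Longrightarrow> total_recursive h \<Longrightarrow> total_recursive (\<lambda>x. g x div h x)"
proof -
  have "total_recursive (\<lambda>z. pfst z div psnd z)"
    by (subst div_eq_rec_nat) (intro total_recursive_intros total_recursive_rec_nat)
  then show "total_recursive g \<Longrightarrow> total_recursive h \<Longrightarrow> total_recursive (\<lambda>x. g x div h x)"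
    by (rule total_recursive_comp2)
qed

lemma total_recursive_mod [total_recursive_intros]:
  "total_recursive g \<Longrightarrow> total_recursive h \<Longrightarrow> total_recursive (\<lambda>x. g x mod h x)"
proof -
  assume "total_recursive g" "total_recursive h"
  then have "total_recursive (\<lambda>x. g x - h x * (g x div h x))" by (intro total_recursive_intros)
  then show ?thesis by (simp add: minus_mult_div_eq_mod)
qed

lemma total_recursive_power [total_recursive_intros]:
  "total_recursive g \<Longrightarrow> total_recursive h \<Longrightarrow> total_recursive (\<lambda>x. g x ^ h x)"
proof -
  have "total_recursive (\<lambda>z. rec_nat 1 (\<lambda>_ r. r * pfst z) (psnd z))"
    by (intro total_recursive_intros)
  moreover have "rec_nat 1 (\<lambda>_ r. r * a) n = a ^ n" for a n :: nat by (induction n) auto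
  ultimately have "total_recursive (\<lambda>z. pfst z ^ psnd z)" by simp
  then show "total_recursive g \<Longrightarrow> total_recursive h \<Longrightarrow> total_recursive (\<lambda>x. g x ^ h x)" by (rule total_recursive_comp2)
qed

lemma prod_decode_0 [simp]:
  "prod_decode 0 = (0, 0)" by (simp add: prod_decode_def prod_decode_aux.simps)

definition tlc :: "nat \<Rightarrow> nat" where "tlc c = psnd (c - 1)"
definition hdc :: "nat \<Rightarrow> nat" where "hdc c = pfst (c - 1)"
definition dropc :: "nat \<Rightarrow> nat \<Rightarrow> nat" where "dropc c i = rec_nat c (\<lambda>_ r. tlc r) i"
definition nthd :: "nat \<Rightarrow> nat \<Rightarrow> nat" where
  "nthd c i = (if dropc c i = 0 then 0 else hdc (dropc c i))"
definition lenc :: "nat \<Rightarrow> nat" where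
  "lenc c = rec_nat 0 (\<lambda>i r. if dropc c i = 0 then r else Suc r) c"

lemma dropc_Suc: "dropc c (Suc i) = tlc (dropc c i)" by (simp add: dropc_def)

lemma tlc_encode [simp]: "tlc (list_encode (x # xs)) = list_encode xs" by (simp add: tlc_def)

lemma hdc_encode [simp]: "hdc (list_encode (x # xs)) = x" by (simp add: hdc_def)

lemma list_encode_eq_0: "list_encode xs = 0 \<longleftrightarrow> xs = []" by (cases xs) auto

lemma dropc_encode: "dropc (list_encode xs) i = list_encode (drop i xs)"
proof (induction i arbitrary: xs)
  case 0 then show ?case by (simp add: dropc_def)
next
  case (Suc i)

  have "dropc (list_encode xs) (Suc i) = tlc (list_encode (drop i xs))" by (simp add: dropc_Suc Suc)
  also have "\<dots> = list_encode (drop (Suc i) xs)"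
    by (cases "drop i xs") (auto simp: tlc_def drop_Suc drop_tl dest: arg_cong[of _ _ tl])
  finally show ?case .
qed

lemma nthd_encode: "nthd (list_encode xs) i = (if i < length xs then xs ! i else 0)"
  unfolding nthd_def dropc_encode
  by (cases "drop i xs") (auto simp: list_encode_eq_0 hdc_def nth_via_drop)

lemma le_triangle: "n \<le> triangle n" by (induction n) auto

lemma length_le_list_encode: "length xs \<le> list_encode xs"
proof (induction xs)
  case (Cons x xs)
  have "list_encode xs \<le> prod_encode (x, list_encode xs)"
    using le_triangle[of "x + list_encode xs"] by (simp add: prod_encode_def)
  then show ?case using Cons by simp
qed simp

lemma lenc_encode: "lenc (list_encode xs) = length xs"
proof -
  have "rec_nat 0 (\<lambda>i r. if dropc (list_encode xs) i = 0 then r else Suc r) n = min n (length xs)" for n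
    by (induction n) (auto simp: dropc_encode list_encode_eq_0)
  then show ?thesis using length_le_list_encode[of xs] by (simp add: lenc_def min_def)
qed

lemma nthd_decode: "nthd c i = (if i < length (list_decode c) then list_decode c ! i else 0)"
  using nthd_encode[of "list_decode c"] by simp

lemma total_recursive_tlc [total_recursive_intros]:
  "total_recursive g \<Longrightarrow> total_recursive (\<lambda>x. tlc (g x))" unfolding tlc_def by (intro total_recursive_intros)

lemma total_recursive_hdc [total_recursive_intros]:
  "total_recursive g \<Longrightarrow> total_recursive (\<lambda>x. hdc (g x))" unfolding hdc_def by (intro total_recursive_intros)

lemma total_recursive_dropc [total_recursive_intros]:
  "total_recursive g \<Longrightarrow> total_recursive h \<Longrightarrow> total_recursive (\<lambda>x. dropc (g x) (h x))"
proof -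
  have "total_recursive (\<lambda>z. dropc (pfst z) (psnd z))" unfolding dropc_def by (intro total_recursive_intros)
  then show "total_recursive g \<Longrightarrow> total_recursive h \<Longrightarrow> total_recursive (\<lambda>x. dropc (g x) (h x))" by (rule total_recursive_comp2)
qed

lemma total_recursive_nthd [total_recursive_intros]:
  "total_recursive g \<Longrightarrow> total_recursive h \<Longrightarrow> total_recursive (\<lambda>x. nthd (g x) (h x))"
  unfolding nthd_def by (intro total_recursive_intros)

lemma total_recursive_lenc [total_recursive_intros]:
  "total_recursive g \<Longrightarrow> total_recursive (\<lambda>x. lenc (g x))"
proof -
  have "total_recursive (\<lambda>z. lenc z)" unfolding lenc_def by (intro total_recursive_intros)
  then show "total_recursive g \<Longrightarrow> total_recursive (\<lambda>x. lenc (g x))" by (rule total_recursive_comp)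
qed

section \<open>Exact rational arithmetic on codes\<close>

text \<open>The code \<open>rtriple p q d\<close> stands for the rational \<open>(p - q) / (d + 1)\<close>, so that all
  arithmetic on rationals is arithmetic on natural numbers.\<close>

definition rtriple :: "nat \<Rightarrow> nat \<Rightarrow> nat \<Rightarrow> nat" where "rtriple p q d = prod_encode (p, prod_encode (q, d))"
abbreviation rN :: "nat \<Rightarrow> nat" where "rN c \<equiv> pfst c"
abbreviation rM :: "nat \<Rightarrow> nat" where "rM c \<equiv> pfst (psnd c)"
abbreviation rD :: "nat \<Rightarrow> nat" where "rD c \<equiv> Suc (psnd (psnd c))"

definition rval :: "nat \<Rightarrow> real" where "rval c = (real (rN c) - real (rM c)) / real (rD c)"

lemma rtriple_sel [simp]:
  "pfst (rtriple p q d) = p" "pfst (psnd (rtriple p q d)) = q" "psnd (psnd (rtriple p q d)) = d"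
  by (simp_all add: rtriple_def)

lemma rval_rtriple:
  "rval (rtriple p q d) = (real p - real q) / real (Suc d)" by (simp add: rval_def)

lemma total_recursive_rtriple [total_recursive_intros]:
  "total_recursive f \<Longrightarrow> total_recursive g \<Longrightarrow> total_recursive h \<Longrightarrow> total_recursive (\<lambda>x. rtriple (f x) (g x) (h x))"
  unfolding rtriple_def by (intro total_recursive_intros)

definition radd :: "nat \<Rightarrow> nat \<Rightarrow> nat" where
  "radd a b = rtriple (rN a * rD b + rN b * rD a) (rM a * rD b + rM b * rD a) (rD a * rD b - 1)"
definition rneg :: "nat \<Rightarrow> nat" where "rneg a = rtriple (rM a) (rN a) (rD a - 1)"
definition rsub :: "nat \<Rightarrow> nat \<Rightarrow> nat" where "rsub a b = radd a (rneg b)"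
definition rmul :: "nat \<Rightarrow> nat \<Rightarrow> nat" where
  "rmul a b = rtriple (rN a * rN b + rM a * rM b) (rN a * rM b + rM a * rN b) (rD a * rD b - 1)"
definition rle :: "nat \<Rightarrow> nat \<Rightarrow> bool" where
  "rle a b \<longleftrightarrow> rN a * rD b + rM b * rD a \<le> rN b * rD a + rM a * rD b"
definition rlt :: "nat \<Rightarrow> nat \<Rightarrow> bool" where
  "rlt a b \<longleftrightarrow> rN a * rD b + rM b * rD a < rN b * rD a + rM a * rD b"
definition rofn :: "nat \<Rightarrow> nat" where "rofn n = rtriple n 0 0"
definition rpow2 :: "nat \<Rightarrow> nat" where "rpow2 k = rtriple 1 0 (2 ^ k - 1)"
definition rdivn :: "nat \<Rightarrow> nat \<Rightarrow> nat" where "rdivn a k = rtriple (rN a) (rM a) (rD a * k - 1)"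
definition rabs :: "nat \<Rightarrow> nat" where
  "rabs a = (if rM a \<le> rN a then rtriple (rN a - rM a) 0 (rD a - 1) else rtriple (rM a - rN a) 0 (rD a - 1))"

lemma Suc_pred_mult: "Suc (Suc a * Suc b - 1) = Suc a * Suc b" by simp

lemma rval_radd [simp]: "rval (radd a b) = rval a + rval b"
  unfolding radd_def rval_rtriple unfolding rval_def
  by (simp only: Suc_pred_mult) (simp add: field_simps)

lemma rval_rneg [simp]: "rval (rneg a) = - rval a"
  unfolding rneg_def rval_rtriple rval_def by (simp add: field_simps)

lemma rval_rsub [simp]: "rval (rsub a b) = rval a - rval b"
  unfolding rsub_def by simp

lemma rval_rmul [simp]: "rval (rmul a b) = rval a * rval b"
  unfolding rmul_def rval_rtriple unfolding rval_def
  by (simp only: Suc_pred_mult) (simp add: field_simps)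

lemma rle_iff [simp]: "rle a b \<longleftrightarrow> rval a \<le> rval b"
proof -
  have "rval a \<le> rval b \<longleftrightarrow> (real (rN a) - real (rM a)) * real (rD b) \<le> (real (rN b) - real (rM b)) * real (rD a)"
    unfolding rval_def by (simp add: divide_le_eq le_divide_eq field_simps del: of_nat_Suc)
  also have "\<dots> \<longleftrightarrow> real (rN a * rD b + rM b * rD a) \<le> real (rN b * rD a + rM a * rD b)"
    by (simp add: algebra_simps)
  also have "\<dots> \<longleftrightarrow> rle a b" unfolding rle_def of_nat_le_iff ..
  finally show ?thesis ..
qed

lemma rlt_iff [simp]: "rlt a b \<longleftrightarrow> rval a < rval b"
proof -
  have "rval a < rval b \<longleftrightarrow> (real (rN a) - real (rM a)) * real (rD b) < (real (rN b) - real (rM b)) * real (rD a)"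
    unfolding rval_def by (simp add: divide_less_eq less_divide_eq field_simps del: of_nat_Suc)
  also have "\<dots> \<longleftrightarrow> real (rN a * rD b + rM b * rD a) < real (rN b * rD a + rM a * rD b)"
    by (simp add: algebra_simps)
  also have "\<dots> \<longleftrightarrow> rlt a b" unfolding rlt_def of_nat_less_iff ..
  finally show ?thesis ..
qed

lemma rval_rofn [simp]: "rval (rofn n) = real n" unfolding rofn_def rval_rtriple by simp

lemma rval_rpow2 [simp]: "rval (rpow2 k) = (1/2) ^ k"
proof -
  have "Suc (2 ^ k - 1) = 2 ^ k" by simp
  then show ?thesis unfolding rpow2_def rval_rtriple by (simp add: power_one_over)
qed

lemma rval_rdivn [simp]: "k > 0 \<Longrightarrow> rval (rdivn a k) = rval a / real k"
  unfolding rdivn_def rval_rtriple unfolding rval_def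
  by (cases k) (simp_all only: Suc_pred_mult, simp_all add: field_simps)

lemma rval_rabs [simp]: "rval (rabs a) = \<bar>rval a\<bar>"
  unfolding rabs_def rval_def by (auto simp: rval_rtriple of_nat_diff)

definition rsqrt_le :: "nat \<Rightarrow> nat \<Rightarrow> bool" where
  "rsqrt_le d r \<longleftrightarrow> rle (rofn 0) r \<and> rle d (rmul r r)"

definition rsqrt_lt :: "nat \<Rightarrow> nat \<Rightarrow> bool" where
  "rsqrt_lt d r \<longleftrightarrow> rlt (rofn 0) r \<and> rlt d (rmul r r)"

lemma rsqrt_le_iff:
  "rval d = \<delta>\<^sup>2 \<Longrightarrow> 0 \<le> \<delta> \<Longrightarrow> rsqrt_le d r \<longleftrightarrow> \<delta> \<le> rval r"
  unfolding rsqrt_le_def by (auto simp: power2_eq_square[symmetric] intro: power_mono power2_le_imp_le)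

lemma rsqrt_lt_iff:
  "rval d = \<delta>\<^sup>2 \<Longrightarrow> 0 \<le> \<delta> \<Longrightarrow> rsqrt_lt d r \<longleftrightarrow> \<delta> < rval r"
  unfolding rsqrt_lt_def by (auto simp: power2_eq_square[symmetric] intro: power_strict_mono power2_less_imp_less)

lemma total_recursive_radd [total_recursive_intros]:
  "total_recursive f \<Longrightarrow> total_recursive g \<Longrightarrow> total_recursive (\<lambda>x. radd (f x) (g x))"
  unfolding radd_def by (intro total_recursive_intros)

lemma total_recursive_rneg [total_recursive_intros]:
  "total_recursive f \<Longrightarrow> total_recursive (\<lambda>x. rneg (f x))"
  unfolding rneg_def by (intro total_recursive_intros)

lemma total_recursive_rsub [total_recursive_intros]:
  "total_recursive f \<Longrightarrow> total_recursive g \<Longrightarrow> total_recursive (\<lambda>x. rsub (f x) (g x))"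
  unfolding rsub_def by (intro total_recursive_intros)

lemma total_recursive_rmul [total_recursive_intros]:
  "total_recursive f \<Longrightarrow> total_recursive g \<Longrightarrow> total_recursive (\<lambda>x. rmul (f x) (g x))"
  unfolding rmul_def by (intro total_recursive_intros)

lemma decidable_rle [total_recursive_intros]:
  "total_recursive f \<Longrightarrow> total_recursive g \<Longrightarrow> decidable (\<lambda>x. rle (f x) (g x))"
  unfolding rle_def by (intro total_recursive_intros)

lemma decidable_rlt [total_recursive_intros]:
  "total_recursive f \<Longrightarrow> total_recursive g \<Longrightarrow> decidable (\<lambda>x. rlt (f x) (g x))"
  unfolding rlt_def by (intro total_recursive_intros)

lemma decidable_rsqrt_le [total_recursive_intros]:
  "total_recursive f \<Longrightarrow> total_recursive g \<Longrightarrow> decidable (\<lambda>x. rsqrt_le (f x) (g x))"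
  unfolding rsqrt_le_def by (intro total_recursive_intros)

lemma decidable_rsqrt_lt [total_recursive_intros]:
  "total_recursive f \<Longrightarrow> total_recursive g \<Longrightarrow> decidable (\<lambda>x. rsqrt_lt (f x) (g x))"
  unfolding rsqrt_lt_def by (intro total_recursive_intros)

lemma total_recursive_rofn [total_recursive_intros]:
  "total_recursive f \<Longrightarrow> total_recursive (\<lambda>x. rofn (f x))"
  unfolding rofn_def by (intro total_recursive_intros)

lemma total_recursive_rpow2 [total_recursive_intros]:
  "total_recursive f \<Longrightarrow> total_recursive (\<lambda>x. rpow2 (f x))"
  unfolding rpow2_def by (intro total_recursive_intros)

lemma total_recursive_rdivn [total_recursive_intros]:
  "total_recursive f \<Longrightarrow> total_recursive g \<Longrightarrow> total_recursive (\<lambda>x. rdivn (f x) (g x))"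
  unfolding rdivn_def by (intro total_recursive_intros)

lemma total_recursive_rabs [total_recursive_intros]:
  "total_recursive f \<Longrightarrow> total_recursive (\<lambda>x. rabs (f x))"
  unfolding rabs_def by (intro total_recursive_intros)

definition rtriple_of_code :: "nat \<Rightarrow> nat" where
  "rtriple_of_code k = (if psnd k = 0 then rtriple 0 0 0
            else if even (pfst k) then rtriple (pfst k div 2) 0 (psnd k - 1)
            else rtriple 0 (Suc (pfst k div 2)) (psnd k - 1))"

lemma rval_rtriple_of_code: "rval (rtriple_of_code k) = of_rat (rat_code k)"
proof -
  obtain a b where k: "prod_decode k = (a, b)" by (cases "prod_decode k")
  have rc: "rat_code k = Fract (int_decode a) (int b)" by (simp add: rat_code_def k)
  have "of_rat (Fract (int_decode a) (int b)) = (real_of_int (int_decode a) / real b :: real)"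
    by (simp add: Fract_of_int_quotient of_rat_divide)
  moreover have "rval (rtriple_of_code k) = real_of_int (int_decode a) / real b"
  proof (cases "b = 0")
    case True then show ?thesis by (simp add: rtriple_of_code_def k rval_rtriple)
  next
    case False
    then have b: "Suc (b - 1) = b" by simp
    show ?thesis
    proof (cases "even a")
      case True
      then have "int_decode a = int (a div 2)" by (simp add: int_decode_def sum_decode_def)
      then show ?thesis using True False by (simp add: rtriple_of_code_def k rval_rtriple b)
    next
      case odd: False
      then have "int_decode a = - int (a div 2) - 1" by (simp add: int_decode_def sum_decode_def)
      then show ?thesis using odd False by (simp add: rtriple_of_code_def k rval_rtriple b)
    qed
  qed
  ultimately show ?thesis using rc by simp
qed

lemma total_recursive_rtriple_of_code [total_recursive_intros]:
  "total_recursive f \<Longrightarrow> total_recursive (\<lambda>x. rtriple_of_code (f x))"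
proof -
  have e: "even n \<longleftrightarrow> n mod 2 = 0" for n :: nat by presburger
  show "total_recursive f \<Longrightarrow> total_recursive (\<lambda>x. rtriple_of_code (f x))" unfolding rtriple_of_code_def e by (intro total_recursive_intros)
qed

definition rsumsq :: "nat \<Rightarrow> (nat \<Rightarrow> nat) \<Rightarrow> nat" where
  "rsumsq n F = rec_nat (rtriple 0 0 0) (\<lambda>i acc. radd acc (rmul (F i) (F i))) n"

lemma rval_rsumsq: "rval (rsumsq n F) = (\<Sum>i<n. (rval (F i))^2)"
  by (induction n) (simp_all add: rsumsq_def rval_rtriple power2_eq_square)

lemma total_recursive_rsumsq [total_recursive_intros]:
  "total_recursive (\<lambda>z. F (pfst z) (psnd z)) \<Longrightarrow> total_recursive n \<Longrightarrow> total_recursive (\<lambda>x. rsumsq (n x) (F x))"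
proof -
  assume F: "total_recursive (\<lambda>z. F (pfst z) (psnd z))" and n: "total_recursive n"
  have F': "total_recursive (\<lambda>z. F (pfst z) (pfst (psnd z)))"
    using total_recursive_comp[OF F, of "\<lambda>z. prod_encode (pfst z, pfst (psnd z))"] by (simp add: total_recursive_intros)
  show ?thesis unfolding rsumsq_def
    by (intro total_recursive_rec_nat total_recursive_const n total_recursive_radd total_recursive_rmul total_recursive_psnd F' total_recursive_id)
qed

section \<open>The certificate search\<close>

definition qcoord :: "nat \<Rightarrow> nat \<Rightarrow> nat" where "qcoord v i = rtriple_of_code (nthd v i)"
definition gcoord :: "nat \<Rightarrow> nat \<Rightarrow> nat \<Rightarrow> nat \<Rightarrow> nat" where
  "gcoord t M g i = rtriple ((t div (2 * M + 1) ^ i) mod (2 * M + 1)) M (2 ^ g - 1)"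
definition rdist2 :: "nat \<Rightarrow> nat \<Rightarrow> nat \<Rightarrow> nat" where
  "rdist2 N v w = rsumsq N (\<lambda>i. rsub (qcoord v i) (qcoord w i))"
definition rdist2_grid :: "nat \<Rightarrow> nat \<Rightarrow> nat \<Rightarrow> nat \<Rightarrow> nat \<Rightarrow> nat" where
  "rdist2_grid N t M g w = rsumsq N (\<lambda>i. rsub (gcoord t M g i) (qcoord w i))"
definition ball_centre :: "nat \<Rightarrow> nat" where "ball_centre b = pfst b"
definition ball_radius :: "nat \<Rightarrow> nat" where "ball_radius b = rabs (rtriple_of_code (psnd b))"
definition fld :: "nat \<Rightarrow> nat \<Rightarrow> nat" where "fld t k = nthd t k"

text \<open>Field 1 is the code of the proposed ball, field 2 an
  index at which the positive information lists it, field 3 the index \<open>i\<close> of the approximation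
  of \<open>x\<close> used, and field 0 selects the kind. A far certificate continues with the lower bound
  \<open>s\<close>, the grid exponent \<open>g\<close>, the grid half-width \<open>M\<close> (in steps of \<open>2\<^sup>-\<^sup>g\<close>) and the number \<open>J\<close> of
  negative entries consulted; a near certificate continues with a second ball meeting \<open>A\<close> and
  its index in the positive information. The input interleaves the name of \<open>x\<close> at even
  positions, the negative information at positions \<open>4j+1\<close> and the positive one at \<open>4j+3\<close>.\<close>

definition reads :: "nat \<Rightarrow> nat" where
  "reads t = 4 * (fld t 2 + fld t 3 + fld t 5 + fld t 7) + 4"

definition chk_nested :: "nat \<Rightarrow> (nat \<Rightarrow> nat) \<Rightarrow> nat \<Rightarrow> nat \<Rightarrow> nat \<Rightarrow> bool" where
  "chk_nested N P m st t \<longleftrightarrow>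
     P (4 * fld t 2 + 3) = Suc (fld t 1) \<and>
     rlt (rofn 0) (ball_radius (fld t 1)) \<and> rle (ball_radius (fld t 1)) (rpow2 m) \<and>
     (st = 1 \<or> 2 \<le> st \<and>
        rsqrt_le (rdist2 N (ball_centre (fld t 1)) (ball_centre (st - 2)))
          (rsub (ball_radius (st - 2)) (ball_radius (fld t 1))))"

definition chk_far :: "nat \<Rightarrow> nat \<Rightarrow> (nat \<Rightarrow> nat) \<Rightarrow> nat \<Rightarrow> bool" where
  "chk_far N Q P t \<longleftrightarrow>
     rlt (rofn 0) (fld t 4) \<and>
     rsqrt_le (rdist2 N (P (2 * fld t 3)) (ball_centre (fld t 1)))
       (rsub (rsub (rmul (radd (rofn 1) (rdivn (rofn 1) Q)) (fld t 4)) (rpow2 (fld t 3)))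
          (ball_radius (fld t 1))) \<and>
     rsqrt_le (rdist2 N (P (2 * fld t 3)) 0)
       (rsub (rsub (rmul (rofn (fld t 6)) (rpow2 (fld t 5))) (radd (fld t 4) (rpow2 (fld t 3))))
          (rmul (rofn N) (rpow2 (fld t 5)))) \<and>
     (\<forall>u < (2 * fld t 6 + 1) ^ N.
        rsqrt_le (rdist2_grid N u (fld t 6) (fld t 5) (P (2 * fld t 3)))
          (radd (radd (fld t 4) (rpow2 (fld t 3))) (rmul (rofn N) (rpow2 (fld t 5)))) \<longrightarrow>
        (\<exists>j < fld t 7. P (4 * j + 1) \<noteq> 0 \<and>
           rsqrt_lt (rdist2_grid N u (fld t 6) (fld t 5) (ball_centre (P (4 * j + 1) - 1)))
             (rsub (ball_radius (P (4 * j + 1) - 1)) (rmul (rofn N) (rpow2 (fld t 5))))))"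

definition chk_near :: "nat \<Rightarrow> nat \<Rightarrow> (nat \<Rightarrow> nat) \<Rightarrow> nat \<Rightarrow> bool" where
  "chk_near N Q P t \<longleftrightarrow>
     rsqrt_lt (rdist2 N (P (2 * fld t 3)) (ball_centre (fld t 1)))
       (rsub (rdivn (ball_radius (fld t 1)) 2) (rpow2 (fld t 3))) \<and>
     P (4 * fld t 5 + 3) = Suc (fld t 4) \<and>
     rsqrt_le (rdist2 N (P (2 * fld t 3)) (ball_centre (fld t 4)))
       (rsub (rsub (rdivn (rmul (ball_radius (fld t 1)) (rofn Q)) (2 * (Q + 1))) (rpow2 (fld t 3)))
          (ball_radius (fld t 4)))"

definition chk :: "nat \<Rightarrow> nat \<Rightarrow> (nat \<Rightarrow> nat) \<Rightarrow> nat \<Rightarrow> nat \<Rightarrow> nat \<Rightarrow> bool" where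
  "chk N Q P m st t \<longleftrightarrow> chk_nested N P m st t \<and> (if fld t 0 = 0 then chk_far N Q P t else chk_near N Q P t)"

text \<open>Stage codes: \<open>1\<close> stands for the whole space, \<open>b + 2\<close> for the basic ball \<open>b\<close>, and \<open>0\<close> for a
  stalled run. On the input prefix of length \<open>k\<close>, \<open>search\<close> returns \<open>1\<close> (no answer yet) as soon as a
  certificate would read beyond the prefix, and \<open>0\<close> if none of the first \<open>k\<close> certificates is valid.\<close>

definition search :: "nat \<Rightarrow> nat \<Rightarrow> (nat \<Rightarrow> nat) \<Rightarrow> nat \<Rightarrow> nat \<Rightarrow> nat \<Rightarrow> nat" where
  "search N Q P k m st = rec_nat 0 (\<lambda>t acc. if acc \<noteq> 0 then acc else if k < reads t then 1
      else if chk N Q P m st t then Suc (Suc (fld t 1)) else 0) k"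

definition run :: "nat \<Rightarrow> nat \<Rightarrow> (nat \<Rightarrow> nat) \<Rightarrow> nat \<Rightarrow> nat \<Rightarrow> nat" where
  "run N Q P k n = rec_nat 1 (\<lambda>m st. if st = 0 then 0 else if 2 \<le> search N Q P k m st then search N Q P k m st else 0) n"

definition proj_machine :: "nat \<Rightarrow> nat \<Rightarrow> nat \<Rightarrow> nat" where
  "proj_machine N Q w = (if 2 \<le> run N Q (nthd (psnd w)) (lenc (psnd w)) (Suc (pfst w))
                then Suc (ball_centre (run N Q (nthd (psnd w)) (lenc (psnd w)) (Suc (pfst w)) - 2)) else 0)"

lemma total_recursive_qcoord [total_recursive_intros]:
  assumes "total_recursive f" and "total_recursive g"
  shows "total_recursive (\<lambda>x. qcoord (f x) (g x))"
  unfolding qcoord_def by (intro total_recursive_intros assms assms[THEN total_recursive_comp])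

lemma total_recursive_gcoord [total_recursive_intros]:
  assumes "total_recursive f" and "total_recursive g" and "total_recursive h" and "total_recursive k"
  shows "total_recursive (\<lambda>x. gcoord (f x) (g x) (h x) (k x))"
  unfolding gcoord_def by (intro total_recursive_intros assms assms[THEN total_recursive_comp])

lemma total_recursive_rdist2 [total_recursive_intros]:
  assumes "total_recursive f" and "total_recursive g"
  shows "total_recursive (\<lambda>x. rdist2 N (f x) (g x))"
  unfolding rdist2_def by (intro total_recursive_intros assms assms[THEN total_recursive_comp])

lemma total_recursive_rdist2_grid [total_recursive_intros]:
  assumes "total_recursive f" and "total_recursive g" and "total_recursive h" and "total_recursive k"
  shows "total_recursive (\<lambda>x. rdist2_grid N (f x) (g x) (h x) (k x))"
  unfolding rdist2_grid_def by (intro total_recursive_intros assms assms[THEN total_recursive_comp])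

lemma total_recursive_ball_centre [total_recursive_intros]:
  assumes "total_recursive f"
  shows "total_recursive (\<lambda>x. ball_centre (f x))" unfolding ball_centre_def by (intro total_recursive_intros assms)

lemma total_recursive_ball_radius [total_recursive_intros]:
  assumes "total_recursive f"
  shows "total_recursive (\<lambda>x. ball_radius (f x))" unfolding ball_radius_def by (intro total_recursive_intros assms)

lemma total_recursive_fld [total_recursive_intros]:
  assumes "total_recursive f"
  shows "total_recursive (\<lambda>x. fld (f x) k)" unfolding fld_def by (intro total_recursive_intros assms)

lemma total_recursive_reads [total_recursive_intros]:
  assumes "total_recursive f"
  shows "total_recursive (\<lambda>x. reads (f x))" unfolding reads_def by (intro total_recursive_intros assms)

lemma decidable_chk [total_recursive_intros]:
  assumes "total_recursive l" and "total_recursive m" and "total_recursive st" and "total_recursive t"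
  shows "decidable (\<lambda>x. chk N Q (nthd (l x)) (m x) (st x) (t x))"
  unfolding chk_def chk_nested_def chk_far_def chk_near_def by (intro total_recursive_intros assms assms[THEN total_recursive_comp])

lemma total_recursive_search [total_recursive_intros]:
  assumes "total_recursive l" and "total_recursive k" and "total_recursive m" and "total_recursive st"
  shows "total_recursive (\<lambda>x. search N Q (nthd (l x)) (k x) (m x) (st x))"
  unfolding search_def by (intro total_recursive_intros assms assms[THEN total_recursive_comp])

lemma total_recursive_run [total_recursive_intros]:
  assumes "total_recursive l" and "total_recursive k" and "total_recursive n"
  shows "total_recursive (\<lambda>x. run N Q (nthd (l x)) (k x) (n x))"
  unfolding run_def by (intro total_recursive_intros assms assms[THEN total_recursive_comp])

lemma total_recursive_proj_machine: "total_recursive (proj_machine N Q)"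
  unfolding proj_machine_def by (intro total_recursive_intros)

lemma coord_idx_bij: "bij_betw (coord_idx :: 'n::finite \<Rightarrow> nat) UNIV {..<CARD('n)}"
proof -
  have "\<exists>f. bij_betw f (UNIV :: 'n set) {..<CARD('n)}"
    using ex_bij_betw_finite_nat[of "UNIV :: 'n set"] by (simp add: atLeast0LessThan)
  then show ?thesis unfolding coord_idx_def by (rule someI_ex)
qed

lemma coord_idx_lt: "coord_idx (j :: 'n::finite) < CARD('n)"
  using coord_idx_bij[where 'n='n] by (auto simp: bij_betw_def)

lemma coord_idx_inj: "coord_idx (j :: 'n::finite) = coord_idx k \<longleftrightarrow> j = k"
  using coord_idx_bij[where 'n='n] by (auto simp: bij_betw_def inj_on_def)

lemma sum_coord: "(\<Sum>j\<in>(UNIV :: 'n::finite set). f (coord_idx j)) = (\<Sum>i<CARD('n). f i)"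
  using sum.reindex_bij_betw[OF coord_idx_bij[where 'n='n], of f] by simp

lemma qvec_nth: "(qvec v :: real ^ 'n::finite) $ j = rval (qcoord v (coord_idx j))"
  unfolding qvec_def qcoord_def rval_rtriple_of_code nthd_decode by (simp add: Let_def)

lemma dist_sq: "dist (u :: real ^ 'n::finite) w ^ 2 = (\<Sum>j\<in>UNIV. (u $ j - w $ j)^2)"
  unfolding dist_vec_def L2_set_def by (simp add: sum_nonneg dist_real_def)

lemma rval_rdist2: "rval (rdist2 CARD('n::finite) v w) = dist (qvec v :: real ^ 'n) (qvec w) ^ 2"
  unfolding dist_sq rdist2_def rval_rsumsq qvec_nth
  using sum_coord[of "\<lambda>i. (rval (qcoord v i) - rval (qcoord w i))^2", where 'n='n] by simp

definition grid_vec :: "nat \<Rightarrow> nat \<Rightarrow> nat \<Rightarrow> real ^ 'n::finite" where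
  "grid_vec u M g = (\<chi> j. rval (gcoord u M g (coord_idx j)))"

lemma rval_rdist2_grid:
  "rval (rdist2_grid CARD('n::finite) u M g w) = dist (grid_vec u M g :: real ^ 'n) (qvec w) ^ 2"
  unfolding dist_sq rdist2_grid_def rval_rsumsq qvec_nth grid_vec_def
  using sum_coord[of "\<lambda>i. (rval (gcoord u M g i) - rval (qcoord w i))^2", where 'n='n] by simp

lemma rsqrt_le_rdist2 [simp]:
  "rsqrt_le (rdist2 CARD('n::finite) v w) r \<longleftrightarrow> dist (qvec v :: real ^ 'n) (qvec w) \<le> rval r"
  by (rule rsqrt_le_iff[OF rval_rdist2 zero_le_dist])

lemma rsqrt_lt_rdist2 [simp]:
  "rsqrt_lt (rdist2 CARD('n::finite) v w) r \<longleftrightarrow> dist (qvec v :: real ^ 'n) (qvec w) < rval r"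
  by (rule rsqrt_lt_iff[OF rval_rdist2 zero_le_dist])

lemma rsqrt_le_rdist2_grid [simp]:
  "rsqrt_le (rdist2_grid CARD('n::finite) u M g w) r \<longleftrightarrow> dist (grid_vec u M g :: real ^ 'n) (qvec w) \<le> rval r"
  by (rule rsqrt_le_iff[OF rval_rdist2_grid zero_le_dist])

lemma rsqrt_lt_rdist2_grid [simp]:
  "rsqrt_lt (rdist2_grid CARD('n::finite) u M g w) r \<longleftrightarrow> dist (grid_vec u M g :: real ^ 'n) (qvec w) < rval r"
  by (rule rsqrt_lt_iff[OF rval_rdist2_grid zero_le_dist])

lemma rval_gcoord:
  "rval (gcoord u M g i) = (real ((u div (2 * M + 1) ^ i) mod (2 * M + 1)) - real M) / 2 ^ g"
proof -
  have "real (Suc (2 ^ g - 1)) = 2 ^ g" by simp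
  then show ?thesis unfolding gcoord_def rval_rtriple by simp
qed

lemma basic_ball_eq: "basic_ball b = ball (qvec (ball_centre b)) (rval (ball_radius b))"
  unfolding basic_ball_def ball_centre_def ball_radius_def rval_rabs rval_rtriple_of_code by (simp split: prod.split)

lemma qvec_0: "qvec 0 = (0 :: real ^ 'n::finite)"
  unfolding qvec_def by (simp add: vec_eq_iff rat_code_def Fract_of_int_quotient)

lemma fld_list [simp]: "k < length xs \<Longrightarrow> fld (list_encode xs) k = xs ! k"
  unfolding fld_def by (simp add: nthd_encode)

lemma rat_code_surj: "\<exists>k. rat_code k = r"
proof -
  obtain a b where q: "quotient_of r = (a, b)" by (cases "quotient_of r")
  then have b: "b > 0" using quotient_of_denom_pos by blast
  have "rat_code (prod_encode (int_encode a, nat b)) = Fract a b"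
    using b by (simp add: rat_code_def)
  also have "\<dots> = r" using quotient_of_div[OF q] by (simp add: Fract_of_int_quotient)
  finally show ?thesis by blast
qed

lemma qvec_surj:
  "\<exists>v. \<forall>j. (qvec v :: real ^ 'n::finite) $ j = of_rat (g (coord_idx j))"
proof -
  obtain e where e: "\<And>r. rat_code (e r) = r" using rat_code_surj by metis
  let ?l = "map (\<lambda>i. e (g i)) [0..<CARD('n)]"
  have "(qvec (list_encode ?l) :: real ^ 'n) $ j = of_rat (g (coord_idx j))" for j
    using coord_idx_lt[of j] by (simp add: qvec_def Let_def e)
  then show ?thesis by blast
qed

lemma ball_code_ex:
  "\<exists>b. ball_centre b = v \<and> rval (ball_radius b) = of_rat r" if "r \<ge> 0"
proof -
  obtain k where "rat_code k = r" using rat_code_surj by blast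
  then show ?thesis using that
    by (intro exI[of _ "prod_encode (v, k)"]) (simp add: ball_centre_def ball_radius_def rval_rtriple_of_code zero_le_of_rat_iff)
qed

lemma dist_le_sum_abs:
  "dist (u :: real ^ 'n::finite) w \<le> (\<Sum>j\<in>UNIV. \<bar>u $ j - w $ j\<bar>)"
  unfolding dist_vec_def using L2_set_le_sum_abs[of "\<lambda>j. dist (u $ j) (w $ j)" UNIV]
  by (simp add: dist_real_def)

lemma qvec_dense: "\<exists>v. dist (qvec v :: real ^ 'n::finite) y < \<delta>" if "\<delta> > 0"
proof -
  define D where "D = \<delta> / real CARD('n)"
  have D: "D > 0" using that by (simp add: D_def)
  have "\<forall>j. \<exists>q. \<bar>of_rat q - y $ j\<bar> < D"
  proof
    fix j
    obtain r where "r \<in> \<rat>" "y $ j < r" "r < y $ j + D" using Rats_dense_in_real[of "y $ j" "y $ j + D"] D by auto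
    then show "\<exists>q. \<bar>of_rat q - y $ j\<bar> < D" by (metis Rats_cases abs_of_pos add.commute diff_less_eq diff_gt_0_iff_gt)
  qed
  then obtain G where G: "\<And>j. \<bar>of_rat (G j) - y $ j\<bar> < D" by metis
  obtain v where v: "\<And>j. (qvec v :: real ^ 'n) $ j = of_rat ((G \<circ> inv coord_idx) (coord_idx j))"
    using qvec_surj by blast
  have inv: "inv coord_idx (coord_idx j) = (j :: 'n)" for j
    by (rule inv_f_f) (simp add: inj_def coord_idx_inj)
  have "dist (qvec v :: real ^ 'n) y \<le> (\<Sum>j\<in>UNIV. \<bar>(qvec v :: real ^ 'n) $ j - y $ j\<bar>)" by (rule dist_le_sum_abs)
  also have "\<dots> < (\<Sum>j\<in>(UNIV :: 'n set). D)"
    by (rule sum_strict_mono) (use G v inv in auto)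
  also have "\<dots> = \<delta>" by (simp add: D_def)
  finally show ?thesis by blast
qed

section \<open>Dovetailing over finite prefixes of the input\<close>

lemma nthd_prefix: "nthd (prefix_code P k) j = (if j < k then P j else 0)"
  unfolding prefix_code_def nthd_encode by simp

lemma lenc_prefix: "lenc (prefix_code P k) = k"
  unfolding prefix_code_def lenc_encode by simp

lemma chk_local:
  assumes "\<forall>j < reads t. P' j = P j"
  shows "chk N Q P' m st t = chk N Q P m st t"
proof -
  have a: "P' (4 * fld t 2 + 3) = P (4 * fld t 2 + 3)" "P' (2 * fld t 3) = P (2 * fld t 3)"
    "P' (4 * fld t 5 + 3) = P (4 * fld t 5 + 3)"
    using assms by (auto simp: reads_def)
  have b: "j < fld t 7 \<Longrightarrow> P' (4 * j + 1) = P (4 * j + 1)" for j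
    using assms by (auto simp: reads_def)
  show ?thesis unfolding chk_def chk_nested_def chk_far_def chk_near_def a
    using b by (simp cong: conj_cong)
qed

lemma chk_prefix:
  "reads t \<le> k \<Longrightarrow> chk N Q (nthd (prefix_code P k)) m st t = chk N Q P m st t"
  by (rule chk_local) (simp add: nthd_prefix)

context
  fixes c :: "nat \<Rightarrow> bool" and k :: nat
begin

definition first_hit :: "nat \<Rightarrow> nat" where
  "first_hit T = rec_nat 0 (\<lambda>t acc. if acc \<noteq> 0 then acc else if k < reads t then 1
      else if c t then Suc (Suc (fld t 1)) else 0) T"

lemma first_hit_zero:
  "first_hit T = 0 \<longleftrightarrow> (\<forall>t<T. reads t \<le> k \<and> \<not> c t)"
  by (induction T) (auto simp: first_hit_def less_Suc_eq not_less)

lemma first_hit_ge2: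
  "2 \<le> first_hit T \<Longrightarrow> \<exists>t<T. first_hit T = Suc (Suc (fld t 1)) \<and> reads t \<le> k \<and> c t \<and> (\<forall>t'<t. reads t' \<le> k \<and> \<not> c t')"
proof (induction T)
  case 0 then show ?case by (simp add: first_hit_def)
next
  case (Suc T)
  show ?case
  proof (cases "first_hit T = 0")
    case True
    then have z: "\<forall>t<T. reads t \<le> k \<and> \<not> c t" using first_hit_zero by blast
    have "first_hit (Suc T) = (if k < reads T then 1 else if c T then Suc (Suc (fld T 1)) else 0)"
      using True by (simp add: first_hit_def)
    then show ?thesis using Suc.prems z by (auto split: if_splits)
  next
    case False
    then have "first_hit (Suc T) = first_hit T" by (simp add: first_hit_def)
    then show ?thesis using Suc by (metis less_Suc_eq)
  qed
qed

lemma first_hit_found: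
  "t < T \<Longrightarrow> reads t \<le> k \<Longrightarrow> c t \<Longrightarrow> (\<forall>t'<t. reads t' \<le> k \<and> \<not> c t') \<Longrightarrow> first_hit T = Suc (Suc (fld t 1))"
proof (induction T)
  case 0 then show ?case by simp
next
  case (Suc T)
  show ?case
  proof (cases "t < T")
    case True
    then have "first_hit T = Suc (Suc (fld t 1))" using Suc by blast
    then show ?thesis by (simp add: first_hit_def)
  next
    case False
    then have "t = T" using Suc by simp
    then have "first_hit T = 0" using Suc.prems first_hit_zero by blast
    then show ?thesis using Suc.prems \<open>t = T\<close> by (simp add: first_hit_def)
  qed
qed

end

lemma search_first_hit: "search N Q P' k m st = first_hit (chk N Q P' m st) k k"
  unfolding search_def first_hit_def ..

context
  fixes N Q :: nat and P :: "nat \<Rightarrow> nat"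
begin

fun stage :: "nat \<Rightarrow> nat" where
  "stage 0 = 1"
| "stage (Suc m) = Suc (Suc (fld (LEAST t. chk N Q P m (stage m) t) 1))"

lemma stage_ge_1: "stage m \<ge> 1" by (cases m) auto

lemma run_Suc: "run N Q P' k (Suc n) = (let st = run N Q P' k n in
   if st = 0 then 0 else if 2 \<le> search N Q P' k n st then search N Q P' k n st else 0)"
  by (simp add: run_def Let_def)

lemma run_consistent:
  "run N Q (nthd (prefix_code P k)) k n = 0 \<or> run N Q (nthd (prefix_code P k)) k n = stage n"
proof (induction n)
  case 0 then show ?case by (simp add: run_def)
next
  case (Suc n)
  let ?P' = "nthd (prefix_code P k)"
  show ?case
  proof (cases "run N Q ?P' k n = 0")
    case True then show ?thesis by (simp add: run_Suc)
  next
    case False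
    then have st: "run N Q ?P' k n = stage n" using Suc.IH by auto
    show ?thesis
    proof (cases "2 \<le> search N Q ?P' k n (stage n)")
      case True
      then obtain t where t: "search N Q ?P' k n (stage n) = Suc (Suc (fld t 1))" "reads t \<le> k"
        "chk N Q ?P' n (stage n) t" "\<forall>t'<t. reads t' \<le> k \<and> \<not> chk N Q ?P' n (stage n) t'"
        using first_hit_ge2[of "chk N Q ?P' n (stage n)" k k] unfolding search_first_hit by blast
      have c: "chk N Q P n (stage n) t" using t(2,3) chk_prefix by metis
      have nc: "\<forall>t'<t. \<not> chk N Q P n (stage n) t'" using t(4) chk_prefix by metis
      have "(LEAST t. chk N Q P n (stage n) t) = t"
        using c nc by (metis LeastI_ex not_less_Least linorder_neqE_nat)
      then show ?thesis using st t(1) True stage_ge_1[of n] by (simp add: run_Suc Let_def)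
    next
      case False then show ?thesis using st by (simp add: run_Suc Let_def)
    qed
  qed
qed

lemma run_eventually:
  assumes ex: "\<forall>m<n. \<exists>t. chk N Q P m (stage m) t"
  shows "\<exists>K. \<forall>k\<ge>K. run N Q (nthd (prefix_code P k)) k n = stage n"
  using ex
proof (induction n)
  case 0 then show ?case by (simp add: run_def)
next
  case (Suc n)
  then obtain K0 where K0: "\<forall>k\<ge>K0. run N Q (nthd (prefix_code P k)) k n = stage n" by auto
  let ?c = "chk N Q P n (stage n)"
  obtain t0 where "?c t0" using Suc.prems by auto
  define t where "t = (LEAST t. ?c t)"
  have ct: "?c t" unfolding t_def using \<open>?c t0\<close> by (rule LeastI)
  have nct: "\<forall>t'<t. \<not> ?c t'" unfolding t_def using not_less_Least by blast
  define K where "K = K0 + Suc t + (\<Sum>t'\<le>t. reads t')"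
  have "run N Q (nthd (prefix_code P k)) k (Suc n) = stage (Suc n)" if k: "k \<ge> K" for k
  proof -
    let ?P' = "nthd (prefix_code P k)"
    have st: "run N Q ?P' k n = stage n" using K0 k by (simp add: K_def)
    have reads_le: "reads t' \<le> k" if "t' \<le> t" for t'
    proof -
      have "reads t' \<le> (\<Sum>t'\<le>t. reads t')" using that by (intro member_le_sum) auto
      then show ?thesis using k by (simp add: K_def)
    qed
    have "search N Q ?P' k n (stage n) = Suc (Suc (fld t 1))"
      unfolding search_first_hit
    proof (rule first_hit_found)
      show "t < k" using k by (simp add: K_def)
      show "reads t \<le> k" using reads_le by simp
      show "chk N Q ?P' n (stage n) t" using ct reads_le chk_prefix by (metis order_refl)
      show "\<forall>t'<t. reads t' \<le> k \<and> \<not> chk N Q ?P' n (stage n) t'"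
        using nct reads_le chk_prefix by (metis less_imp_le)
    qed
    then show ?thesis using st stage_ge_1[of n] by (simp add: run_Suc t_def)
  qed
  then show ?case by blast
qed

lemma computes_proj_machine:
  assumes ex: "\<forall>m. \<exists>t. chk N Q P m (stage m) t"
  shows "computes_on (proj_machine N Q) P (\<lambda>n. ball_centre (stage (Suc n) - 2))"
  unfolding computes_on_def
proof (rule allI, rule conjI)
  fix n
  have h: "proj_machine N Q (prod_encode (n, prefix_code P k)) =
    (if 2 \<le> run N Q (nthd (prefix_code P k)) k (Suc n)
     then Suc (ball_centre (run N Q (nthd (prefix_code P k)) k (Suc n) - 2)) else 0)" for k
    unfolding proj_machine_def by (simp add: lenc_prefix)
  obtain K where K: "\<forall>k\<ge>K. run N Q (nthd (prefix_code P k)) k (Suc n) = stage (Suc n)"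
    using run_eventually[of "Suc n"] ex by blast
  show "\<exists>k. proj_machine N Q (prod_encode (n, prefix_code P k)) = Suc (ball_centre (stage (Suc n) - 2))"
    using K h[of K] by (intro exI[of _ K]) simp
  show "\<forall>k. proj_machine N Q (prod_encode (n, prefix_code P k)) \<in> {0, Suc (ball_centre (stage (Suc n) - 2))}"
  proof
    fix k show "proj_machine N Q (prod_encode (n, prefix_code P k)) \<in> {0, Suc (ball_centre (stage (Suc n) - 2))}"
      using run_consistent[of k "Suc n"] h[of k] by (auto simp del: stage.simps)
  qed
qed

end

lemma half_pow_lt: "\<epsilon> > 0 \<Longrightarrow> \<exists>e. (1/2::real) ^ e < \<epsilon>"
  using real_arch_pow_inv[of \<epsilon> "1/2"] by simp

lemma dyadic_between:
  fixes lo hi :: real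
  assumes "0 \<le> lo" "lo < hi"
  shows "\<exists>p e. lo < real p / 2 ^ e \<and> real p / 2 ^ e < hi"
proof -
  obtain e where e: "(1/2::real) ^ e < hi - lo" using half_pow_lt[of "hi - lo"] assms by auto
  define p where "p = nat \<lfloor>lo * 2 ^ e\<rfloor> + 1"
  have f0: "0 \<le> \<lfloor>lo * 2 ^ e\<rfloor>" using assms by simp
  have p: "real p = of_int \<lfloor>lo * 2 ^ e\<rfloor> + 1" using f0 by (simp add: p_def)
  have "lo * 2 ^ e < real p" using p by linarith
  then have 1: "lo < real p / 2 ^ e" by (simp add: field_simps)
  have "real p \<le> lo * 2 ^ e + 1" using p by linarith
  then have "real p / 2 ^ e \<le> lo + (1/2) ^ e" by (simp add: field_simps)
  then show ?thesis using 1 e by (intro exI[of _ p] exI[of _ e]) auto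
qed

lemma rval_dyadic: "rval (rtriple p 0 (2 ^ e - 1)) = real p / 2 ^ e"
proof -
  have "real (Suc (2 ^ e - 1)) = 2 ^ e" by simp
  then show ?thesis by (simp add: rval_rtriple)
qed

lemma digits_of_sum:
  fixes B :: nat and dd :: "nat \<Rightarrow> nat"
  assumes B: "B > 0" and d: "\<forall>k<n. dd k < B"
  shows "(\<Sum>k<n. dd k * B ^ k) < B ^ n \<and> (\<forall>k<n. ((\<Sum>k<n. dd k * B ^ k) div B ^ k) mod B = dd k)"
  using d
proof (induction n)
  case 0 then show ?case by simp
next
  case (Suc n)
  let ?u = "\<Sum>k<n. dd k * B ^ k"
  have IH: "?u < B ^ n" "\<forall>k<n. (?u div B ^ k) mod B = dd k" using Suc by auto
  have dn: "dd n < B" using Suc.prems by auto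
  have u': "(\<Sum>k<Suc n. dd k * B ^ k) = ?u + dd n * B ^ n" by simp
  have lt: "?u + dd n * B ^ n < B ^ Suc n"
  proof -
    have "?u + dd n * B ^ n < B ^ n + dd n * B ^ n" using IH by simp
    also have "\<dots> = (dd n + 1) * B ^ n" by simp
    also have "\<dots> \<le> B * B ^ n" using dn by (intro mult_right_mono) auto
    finally show ?thesis by simp
  qed
  have dig: "((?u + dd n * B ^ n) div B ^ k) mod B = dd k" if k: "k < Suc n" for k
  proof (cases "k = n")
    case True
    have "(?u + dd n * B ^ n) div B ^ n = dd n" using IH(1) B
      by (simp add: div_add1_eq[of ?u] div_less)
    then show ?thesis using True dn by simp
  next
    case False
    then have kn: "k < n" using k by simp
    then obtain l where l: "n = k + Suc l" by (metis add_Suc_right less_iff_Suc_add add.commute)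
    have eq: "?u + dd n * B ^ n = ?u + (dd n * B ^ Suc l) * B ^ k" using l by (simp add: power_add)
    have "(?u + (dd n * B ^ Suc l) * B ^ k) div B ^ k = dd n * B ^ Suc l + ?u div B ^ k"
      using B by (intro div_mult_self1) simp
    then have "(?u + dd n * B ^ n) div B ^ k = ?u div B ^ k + dd n * B ^ Suc l"
      by (subst eq) simp
    then have "((?u + dd n * B ^ n) div B ^ k) mod B = (?u div B ^ k) mod B"
      by (simp add: mod_add_eq[symmetric] power_Suc)
    then show ?thesis using IH(2) kn by simp
  qed
  show ?case using u' lt dig by simp
qed

lemma grid_point_code:
  fixes z :: "'n::finite \<Rightarrow> int" and M g :: nat
  assumes z: "\<forall>j. \<bar>z j\<bar> \<le> int M"
  shows "\<exists>u < (2 * M + 1) ^ CARD('n). (grid_vec u M g :: real ^ 'n) = (\<chi> j. of_int (z j) / 2 ^ g)"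
proof -
  define B where "B = 2 * M + 1"
  define dd where "dd k = nat (z (inv coord_idx k) + int M)" for k
  have inv: "inv coord_idx (coord_idx j) = (j :: 'n)" for j
    by (rule inv_f_f) (simp add: inj_def coord_idx_inj)
  have dd: "\<forall>k<CARD('n). dd k < B"
  proof (intro allI impI)
    fix k
    have "z (inv coord_idx k) \<le> int M" using z abs_le_iff by blast
    then show "dd k < B" unfolding dd_def B_def by arith
  qed
  define u where "u = (\<Sum>k<CARD('n). dd k * B ^ k)"
  have u: "u < B ^ CARD('n)" "\<forall>k<CARD('n). (u div B ^ k) mod B = dd k"
    using digits_of_sum[of B "CARD('n)" dd] dd by (auto simp: B_def u_def)
  have "(grid_vec u M g :: real ^ 'n) $ j = of_int (z j) / 2 ^ g" for j
  proof -
    have "(u div B ^ coord_idx j) mod B = dd (coord_idx j)" using u coord_idx_lt by blast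
    moreover have "real (dd (coord_idx j)) = of_int (z j) + real M"
      using z[rule_format, of j] by (simp add: dd_def inv)
    ultimately show ?thesis unfolding grid_vec_def rval_gcoord by (simp add: B_def)
  qed
  then show ?thesis using u by (intro exI[of _ u]) (auto simp: B_def vec_eq_iff)
qed

lemma near_grid_point:
  fixes p :: "real ^ 'n::finite" and h :: real
  assumes h: "h > 0"
  shows "\<exists>z. dist p (\<chi> j. of_int (z j) * h) \<le> real CARD('n) * h \<and> (\<forall>j. \<bar>of_int (z j) * h - p $ j\<bar> \<le> h / 2)"
proof -
  define z where "z j = \<lfloor>p $ j / h + 1/2\<rfloor>" for j
  have zj: "\<bar>of_int (z j) * h - p $ j\<bar> \<le> h / 2" for j
  proof -
    have "of_int (z j) \<le> p $ j / h + 1/2" "p $ j / h + 1/2 < of_int (z j) + 1" unfolding z_def by linarith+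
    then have "of_int (z j) * h \<le> p $ j + h/2" "p $ j + h/2 < of_int (z j) * h + h"
      using h by (simp_all add: field_simps)
    then show ?thesis unfolding abs_le_iff by linarith
  qed
  have "dist p (\<chi> j. of_int (z j) * h) \<le> (\<Sum>j\<in>UNIV. \<bar>p $ j - (\<chi> j. of_int (z j) * h) $ j\<bar>)"
    by (rule dist_le_sum_abs)
  also have "\<dots> \<le> (\<Sum>j\<in>(UNIV :: 'n set). h)"
  proof (intro sum_mono)
    fix j
    have "\<bar>p $ j - of_int (z j) * h\<bar> \<le> h / 2" using zj[of j] by (simp add: abs_minus_commute)
    then show "\<bar>p $ j - (\<chi> j. of_int (z j) * h) $ j\<bar> \<le> h" using h by simp
  qed
  also have "\<dots> = real CARD('n) * h" by simp
  finally show ?thesis using zj by blast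
qed

lemma basic_ball_code_exists:
  assumes "0 < \<delta>"
  shows "\<exists>b. rval (ball_radius b) = (1/2) ^ e \<and> dist (qvec (ball_centre b) :: real ^ 'n::finite) p < \<delta>"
proof -
  obtain v where v: "dist (qvec v :: real ^ 'n) p < \<delta>" using qvec_dense assms by blast
  obtain b where "ball_centre b = v" "rval (ball_radius b) = of_rat ((1/2) ^ e)"
    using ball_code_ex[of "(1/2) ^ e" v] by auto
  then show ?thesis using v by (intro exI[of _ b]) (simp add: of_rat_power of_rat_divide)
qed

lemma half_pow_lt_ge:
  "0 < \<epsilon> \<Longrightarrow> \<exists>e\<ge>m. (1/2::real) ^ e < \<epsilon>"
proof -
  assume "0 < \<epsilon>"
  then obtain e where e: "(1/2::real) ^ e < \<epsilon>" using half_pow_lt by blast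
  have "(1/2::real) ^ max e m \<le> (1/2) ^ e" by (rule power_decreasing) auto
  then have "(1/2::real) ^ max e m < \<epsilon>" using e by linarith
  then show ?thesis by (intro exI[of _ "max e m"]) auto
qed

lemma le_if_le_plus_half_pow:
  "(\<And>m. (a::real) \<le> b + c * (1/2) ^ m) \<Longrightarrow> a \<le> b"
proof (rule ccontr)
  assume H: "\<And>m. a \<le> b + c * (1/2) ^ m" and "\<not> a \<le> b"
  show False
  proof (cases "c \<le> 0")
    case True then show False using H[of 0] \<open>\<not> a \<le> b\<close> by simp
  next
    case False
    then obtain m where "(1/2::real) ^ m < (a - b) / c" using half_pow_lt[of "(a - b) / c"] \<open>\<not> a \<le> b\<close> by auto
    then have "c * (1/2) ^ m < a - b" using False by (simp add: field_simps)
    then show False using H[of m] by linarith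
  qed
qed

locale proj_input =
  fixes P :: "nat \<Rightarrow> nat" and x :: "real ^ 'n::finite" and A :: "(real ^ 'n) set" and Q :: nat
  assumes cx: "cauchy_rep (\<lambda>i. P (2 * i)) x"
    and cA: "closed_rep (\<lambda>i. P (2 * i + 1)) A"
    and ne: "A \<noteq> {}"
    and Qpos: "Q > 0"
begin

definition xq :: "nat \<Rightarrow> real ^ 'n" where "xq i = qvec (P (2 * i))"

abbreviation D :: real where "D \<equiv> infdist x A"
abbreviation E :: real where "E \<equiv> 1 / real Q"
abbreviation cen :: "nat \<Rightarrow> real ^ 'n" where "cen b \<equiv> qvec (ball_centre b)"
abbreviation rad :: "nat \<Rightarrow> real" where "rad b \<equiv> rval (ball_radius b)"

lemma E_pos: "0 < E" and E_le_1: "E \<le> 1"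
  using Qpos by simp_all

lemma xq_close: "dist (xq i) x \<le> (1/2) ^ i"
proof -
  have c: "\<forall>i j. i \<le> j \<longrightarrow> dist (xq i) (xq j) \<le> (1/2) ^ i" and l: "xq \<longlonglongrightarrow> x"
    using cx unfolding cauchy_rep_def xq_def by auto
  have "(\<lambda>j. dist (xq i) (xq j)) \<longlonglongrightarrow> dist (xq i) x" by (intro tendsto_intros l)
  then show ?thesis by (rule LIMSEQ_le_const2) (use c in auto)
qed

lemma A_closed: "closed A" using cA unfolding closed_rep_def by auto

lemma neg_balls_cover:
  "(\<Union>k \<in> enumerated (\<lambda>j. P (4 * j + 1)). basic_ball k) = - A"
proof -
  have "(\<lambda>i. P (2 * (2 * i) + 1)) = (\<lambda>j. P (4 * j + 1))" by (simp add: mult.assoc)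
  then show ?thesis using cA unfolding closed_rep_def by simp
qed

lemma pos_ball_iff:
  "(\<exists>j. P (4 * j + 3) = Suc k) \<longleftrightarrow> basic_ball k \<inter> A \<noteq> {}"
proof -
  have "2 * (2 * i + 1) + 1 = 4 * i + 3" for i :: nat by simp
  then have "(\<lambda>i. P (2 * (2 * i + 1) + 1)) = (\<lambda>j. P (4 * j + 3))" by presburger
  then show ?thesis using cA unfolding closed_rep_def enumerated_def by (simp add: set_eq_iff) metis
qed

lemma neg_ball_disjoint: "P (4 * j + 1) = Suc k \<Longrightarrow> basic_ball k \<inter> A = {}"
  using neg_balls_cover unfolding enumerated_def by blast

lemma D_attained: "\<exists>a\<in>A. D = dist x a"
  using infdist_attains_inf[OF A_closed ne, of x] by metis

lemma chk_nested_iff: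
  "chk_nested CARD('n) P m st t \<longleftrightarrow>
     P (4 * fld t 2 + 3) = Suc (fld t 1) \<and> 0 < rad (fld t 1) \<and> rad (fld t 1) \<le> (1/2) ^ m \<and>
     (st = 1 \<or> 2 \<le> st \<and> dist (cen (fld t 1)) (cen (st - 2)) \<le> rad (st - 2) - rad (fld t 1))"
  by (simp add: chk_nested_def)

definition grid_cert :: "real \<Rightarrow> nat \<Rightarrow> nat \<Rightarrow> nat \<Rightarrow> nat \<Rightarrow> bool" where
  "grid_cert s i g M J \<longleftrightarrow>
     norm (xq i) \<le> real M * (1/2) ^ g - (s + (1/2) ^ i) - real CARD('n) * (1/2) ^ g \<and>
     (\<forall>u < (2 * M + 1) ^ CARD('n).
        dist (grid_vec u M g) (xq i) \<le> s + (1/2) ^ i + real CARD('n) * (1/2) ^ g \<longrightarrow>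
        (\<exists>j < J. P (4 * j + 1) \<noteq> 0 \<and>
           dist (grid_vec u M g) (cen (P (4 * j + 1) - 1)) < rad (P (4 * j + 1) - 1) - real CARD('n) * (1/2) ^ g))"

definition far_cert :: "nat \<Rightarrow> nat \<Rightarrow> real \<Rightarrow> nat \<Rightarrow> nat \<Rightarrow> nat \<Rightarrow> bool" where
  "far_cert b i s g M J \<longleftrightarrow>
     0 < s \<and> dist (xq i) (cen b) \<le> (1 + E) * s - (1/2) ^ i - rad b \<and> grid_cert s i g M J"

definition near_cert :: "nat \<Rightarrow> nat \<Rightarrow> nat \<Rightarrow> nat \<Rightarrow> bool" where
  "near_cert b i b' j' \<longleftrightarrow>
     dist (xq i) (cen b) < rad b / 2 - (1/2) ^ i \<and> P (4 * j' + 3) = Suc b' \<and>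
     dist (xq i) (cen b') \<le> rad b / (2 * (1 + E)) - (1/2) ^ i - rad b'"

lemma chk_far_iff:
  "chk_far CARD('n) Q P t \<longleftrightarrow> far_cert (fld t 1) (fld t 3) (rval (fld t 4)) (fld t 5) (fld t 6) (fld t 7)"
proof -
  have "dist v 0 = norm v" for v :: "real ^ 'n" by (simp add: dist_norm)
  then show ?thesis using Qpos
    by (simp add: chk_far_def far_cert_def grid_cert_def xq_def qvec_0 conj_assoc)
qed

lemma chk_near_iff:
  "chk_near CARD('n) Q P t \<longleftrightarrow> near_cert (fld t 1) (fld t 3) (fld t 4) (fld t 5)"
proof -
  have "r * real Q / real (2 * (Q + 1)) = r / (2 * (1 + E))" for r
    using Qpos by (simp add: field_simps)
  then show ?thesis using Qpos by (simp add: chk_near_def near_cert_def xq_def)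
qed

lemma chk_iff:
  "chk CARD('n) Q P m st t \<longleftrightarrow> chk_nested CARD('n) P m st t \<and>
     (if fld t 0 = 0 then far_cert (fld t 1) (fld t 3) (rval (fld t 4)) (fld t 5) (fld t 6) (fld t 7)
      else near_cert (fld t 1) (fld t 3) (fld t 4) (fld t 5))"
  by (simp add: chk_def chk_far_iff chk_near_iff)

section \<open>Soundness of certificates\<close>

text \<open>Every point within \<open>s\<close> of \<open>x\<close> has a point of the grid of mesh \<open>2\<^sup>-\<^sup>g\<close> within
  \<open>\<rho> = n 2\<^sup>-\<^sup>g\<close>; that grid point lies in a ball of the negative information with \<open>\<rho>\<close> to spare,
  so the point itself is not in \<open>A\<close>.\<close>

lemma grid_cert_sound:
  assumes "grid_cert s i g M J"
  shows "s \<le> D"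
proof -
  let ?h = "(1/2::real) ^ g"
  let ?\<rho> = "real CARD('n) * ?h"
  let ?S = "s + (1/2) ^ i"
  have norm_xq: "norm (xq i) \<le> real M * ?h - ?S - ?\<rho>"
    and cover: "\<And>u. u < (2 * M + 1) ^ CARD('n) \<Longrightarrow> dist (grid_vec u M g) (xq i) \<le> ?S + ?\<rho> \<Longrightarrow>
      \<exists>j < J. P (4 * j + 1) \<noteq> 0 \<and>
        dist (grid_vec u M g) (cen (P (4 * j + 1) - 1)) < rad (P (4 * j + 1) - 1) - ?\<rho>"
    using assms unfolding grid_cert_def by blast+
  have "s \<le> dist x a" if a: "a \<in> A" for a
  proof (rule ccontr)
    assume "\<not> s \<le> dist x a"
    then have dax: "dist (xq i) a < ?S" using xq_close[of i] dist_triangle[of "xq i" a x]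
      by (simp add: dist_commute)
    obtain z where z: "dist a (\<chi> j. of_int (z j) * ?h) \<le> ?\<rho>"
      using near_grid_point[of ?h a] by auto
    define G :: "real ^ 'n" where "G = (\<chi> j. of_int (z j) * ?h)"
    have dGa: "dist G a \<le> ?\<rho>" using z by (simp add: G_def dist_commute)
    have dG: "dist G (xq i) \<le> ?S + ?\<rho>"
      using dGa dax dist_triangle[of G "xq i" a] by (simp add: dist_commute)
    have "\<bar>z j\<bar> \<le> int M" for j
    proof -
      have "\<bar>G $ j\<bar> \<le> norm (xq i) + dist G (xq i)"
        using component_le_norm_cart[of G j] norm_triangle_ineq[of "xq i" "G - xq i"]
        by (simp add: dist_norm)
      also have "\<dots> \<le> real M * ?h" using norm_xq dG by simp
      finally have "\<bar>of_int (z j)\<bar> * ?h \<le> real M * ?h" by (simp add: G_def abs_mult)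
      then show ?thesis by simp
    qed
    then obtain u where u: "u < (2 * M + 1) ^ CARD('n)" and "grid_vec u M g = G"
      using grid_point_code[of z M g] by (auto simp: G_def vec_eq_iff power_one_over)
    then obtain j where "P (4 * j + 1) \<noteq> 0"
      and dj: "dist G (cen (P (4 * j + 1) - 1)) < rad (P (4 * j + 1) - 1) - ?\<rho>"
      using cover[OF u] dG by auto
    then have j: "P (4 * j + 1) = Suc (P (4 * j + 1) - 1)" by simp
    have "a \<in> basic_ball (P (4 * j + 1) - 1)"
      using dj dGa dist_triangle[of a "cen (P (4 * j + 1) - 1)" G]
      by (simp add: basic_ball_eq dist_commute)
    then show False using neg_ball_disjoint[OF j] a by blast
  qed
  then show ?thesis using D_attained by auto
qed

lemma far_cert_sound:
  assumes "far_cert b i s g M J"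
  shows "dist x (cen b) + rad b \<le> (1 + E) * s" and "0 < s" and "s \<le> D"
  using assms xq_close[of i] dist_triangle[of x "cen b" "xq i"] grid_cert_sound
  by (auto simp: far_cert_def dist_commute)

lemma near_cert_sound:
  assumes "near_cert b i b' j'"
  shows "dist x (cen b) < rad b / 2" and "D < rad b / (2 * (1 + E))"
proof -
  have b: "dist (xq i) (cen b) < rad b / 2 - (1/2) ^ i" and j': "P (4 * j' + 3) = Suc b'"
    and b': "dist (xq i) (cen b') \<le> rad b / (2 * (1 + E)) - (1/2) ^ i - rad b'"
    using assms unfolding near_cert_def by blast+
  show "dist x (cen b) < rad b / 2"
    using b xq_close[of i] dist_triangle[of x "cen b" "xq i"] by (simp add: dist_commute)
  obtain a where a: "a \<in> A" "dist (cen b') a < rad b'"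
    using j' pos_ball_iff[of b'] by (auto simp: basic_ball_eq)
  have "D \<le> dist x a" by (rule infdist_le[OF a(1)])
  also have "\<dots> \<le> dist x (xq i) + dist (xq i) (cen b') + dist (cen b') a"
    using dist_triangle[of x a "xq i"] dist_triangle[of "xq i" a "cen b'"] by linarith
  also have "\<dots> < rad b / (2 * (1 + E))"
    using xq_close[of i] b' a(2) by (simp add: dist_commute)
  finally show "D < rad b / (2 * (1 + E))" .
qed

definition region :: "nat \<Rightarrow> (real ^ 'n) set" where
  "region st = (if st = 1 then UNIV else basic_ball (st - 2))"

definition stage_inv :: "nat \<Rightarrow> bool" where
  "stage_inv st \<longleftrightarrow>
     (0 < D \<longrightarrow> (\<exists>a\<in>A. a \<in> region st \<and> dist x a < (1 + E) * D)) \<and> (D = 0 \<longrightarrow> x \<in> region st)"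

lemma stage_inv_1: "stage_inv 1"
proof -
  obtain a where a: "a \<in> A" "D = dist x a" using D_attained by blast
  have "0 < D \<Longrightarrow> dist x a < (1 + E) * D" using a(2) E_pos by simp
  then show ?thesis using a(1) by (auto simp: stage_inv_def region_def)
qed

lemma stage_inv_chk:
  assumes "chk CARD('n) Q P m st t"
  shows "stage_inv (Suc (Suc (fld t 1)))"
proof -
  let ?b = "fld t 1"
  have r: "0 < rad ?b" using assms by (simp add: chk_iff chk_nested_iff)
  have region: "region (Suc (Suc ?b)) = ball (cen ?b) (rad ?b)" by (simp add: region_def basic_ball_eq)
  show ?thesis
  proof (cases "fld t 0 = 0")
    case True
    then have far: "far_cert ?b (fld t 3) (rval (fld t 4)) (fld t 5) (fld t 6) (fld t 7)"
      using assms by (simp add: chk_iff)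
    obtain a where a: "a \<in> A" "dist (cen ?b) a < rad ?b"
      using assms pos_ball_iff[of ?b] by (auto simp: chk_iff chk_nested_iff basic_ball_eq)
    have "dist x a < (1 + E) * rval (fld t 4)"
      using far_cert_sound(1)[OF far] a(2) dist_triangle[of x a "cen ?b"] by linarith
    also have "\<dots> \<le> (1 + E) * D" using far_cert_sound(3)[OF far] E_pos by (intro mult_left_mono) auto
    finally show ?thesis using a far_cert_sound(2,3)[OF far] region by (auto simp: stage_inv_def)
  next
    case False
    then have near: "near_cert ?b (fld t 3) (fld t 4) (fld t 5)" using assms by (simp add: chk_iff)
    obtain a where a: "a \<in> A" "D = dist x a" using D_attained by blast
    have "rad ?b / (2 * (1 + E)) \<le> rad ?b / 2" by (rule frac_le) (use r E_pos in auto)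
    then have "D < rad ?b / 2" using near_cert_sound(2)[OF near] by linarith
    then have "a \<in> region (Suc (Suc ?b))" and "x \<in> region (Suc (Suc ?b))"
      using near_cert_sound(1)[OF near] a(2) dist_triangle[of "cen ?b" a x] region r
      by (auto simp: dist_commute)
    then show ?thesis using a E_pos by (auto simp: stage_inv_def)
  qed
qed

section \<open>Existence of certificates\<close>

lemma grid_cert_exists:
  assumes "0 < s" "s < D" "(1/2) ^ i < (D - s) / 8"
  shows "\<exists>g M J. grid_cert s i g M J"
proof -
  define \<gamma> where "\<gamma> = D - s"
  have \<gamma>: "0 < \<gamma>" using assms by (simp add: \<gamma>_def)
  define K where "K = cball x (D - \<gamma> / 2)"
  define \<C> :: "(real ^ 'n) set set" where "\<C> = basic_ball ` enumerated (\<lambda>j. P (4 * j + 1))"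
  have "K \<subseteq> - A"
  proof
    fix p assume "p \<in> K"
    then have "dist x p < D" using \<gamma> by (simp add: K_def)
    then show "p \<in> - A" by (metis ComplI infdist_le not_le)
  qed
  then have KC: "K \<subseteq> \<Union>\<C>" using neg_balls_cover by (simp add: \<C>_def)
  have "x \<in> K" using assms \<gamma> by (simp add: K_def \<gamma>_def)
  then have Cne: "\<C> \<noteq> {}" using KC by auto
  have opn: "\<And>B. B \<in> \<C> \<Longrightarrow> open B" by (auto simp: \<C>_def basic_ball_eq)
  have cK: "compact K" by (simp add: K_def)
  obtain \<delta> where \<delta>: "0 < \<delta>" "\<And>T. T \<subseteq> K \<Longrightarrow> diameter T < \<delta> \<Longrightarrow> \<exists>B\<in>\<C>. T \<subseteq> B"
    using Lebesgue_number_lemma[OF cK Cne KC opn] by blast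
  obtain g where g: "(1/2::real) ^ g < min (\<delta> / 2) (\<gamma> / 8) / real CARD('n)"
    using half_pow_lt[of "min (\<delta> / 2) (\<gamma> / 8) / real CARD('n)"] \<delta> \<gamma> by auto
  define h :: real where "h = (1/2) ^ g"
  define \<rho> where "\<rho> = real CARD('n) * h"
  have h: "0 < h" by (simp add: h_def)
  have \<rho>: "0 < \<rho>" "\<rho> < \<delta> / 2" "\<rho> < \<gamma> / 8"
    using g h by (auto simp: \<rho>_def h_def field_simps)
  define S where "S = s + (1/2) ^ i"
  define M :: nat where "M = nat \<lceil>(S + \<rho> + norm (xq i)) / h\<rceil>"
  have "(S + \<rho> + norm (xq i)) / h \<le> real M" unfolding M_def by linarith
  then have norm_xq: "norm (xq i) \<le> real M * h - S - \<rho>" using h by (simp add: field_simps)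
  define good where "good u j \<longleftrightarrow> P (4 * j + 1) \<noteq> 0 \<and>
    dist (grid_vec u M g :: real ^ 'n) (cen (P (4 * j + 1) - 1)) < rad (P (4 * j + 1) - 1) - \<rho>" for u j
  have cover: "\<exists>j. good u j" if u: "dist (grid_vec u M g :: real ^ 'n) (xq i) \<le> S + \<rho>" for u
  proof -
    let ?G = "grid_vec u M g :: real ^ 'n"
    have "cball ?G \<rho> \<subseteq> K"
    proof
      fix p assume "p \<in> cball ?G \<rho>"
      then have "dist x p \<le> (1/2) ^ i + (S + \<rho>) + \<rho>"
        using xq_close[of i] u dist_triangle[of x p "xq i"] dist_triangle[of "xq i" p ?G]
        by (simp add: dist_commute)
      also have "\<dots> \<le> D - \<gamma> / 2"
      proof -
        obtain q where q: "(1/2::real) ^ i = q" by blast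
        show ?thesis using assms(3) \<rho>(3) unfolding S_def \<gamma>_def q by argo
      qed
      finally show "p \<in> K" by (simp add: K_def)
    qed
    moreover have "diameter (cball ?G \<rho>) < \<delta>" using \<rho> by simp
    ultimately obtain B where "B \<in> \<C>" "cball ?G \<rho> \<subseteq> B" using \<delta>(2) by blast
    then obtain k where k: "k \<in> enumerated (\<lambda>j. P (4 * j + 1))" "cball ?G \<rho> \<subseteq> ball (cen k) (rad k)"
      by (auto simp: \<C>_def basic_ball_eq)
    obtain j where "P (4 * j + 1) = Suc k" using k(1) by (auto simp: enumerated_def)
    moreover have "dist ?G (cen k) < rad k - \<rho>" using k(2) \<rho> by (simp add: cball_subset_ball_iff)
    ultimately have "good u j" by (simp add: good_def)
    then show ?thesis by blast
  qed
  define jf where "jf u = (SOME j. good u j)" for u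
  define J where "J = Suc (\<Sum>u < (2 * M + 1) ^ CARD('n). jf u)"
  have covered: "\<exists>j < J. good u j"
    if "u < (2 * M + 1) ^ CARD('n)" "dist (grid_vec u M g :: real ^ 'n) (xq i) \<le> S + \<rho>" for u
  proof -
    have "good u (jf u)" unfolding jf_def using cover[OF that(2)] by (rule someI_ex)
    moreover have "jf u < J"
      using that(1) member_le_sum[of u "{..<(2 * M + 1) ^ CARD('n)}" jf] by (simp add: J_def)
    ultimately show ?thesis by blast
  qed
  have "grid_cert s i g M J"
    unfolding grid_cert_def h_def[symmetric] \<rho>_def[symmetric] S_def[symmetric]
    using norm_xq covered unfolding good_def by blast
  then show ?thesis by blast
qed

text \<open>The lower bound \<open>s\<close> is chosen so close to \<open>D\<close> that \<open>(1 + E) s\<close> still exceeds the distance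
  from \<open>x\<close> to the far side of the proposed ball.\<close>

lemma far_cert_exists:
  assumes b: "dist (cen b) a < rad b" and \<eta>: "8 * rad b < (1 + E) * D - dist x a"
  shows "\<exists>sc i g M J. far_cert b i (rval sc) g M J"
proof -
  define \<eta> where "\<eta> = (1 + E) * D - dist x a"
  have r: "0 < rad b" using b zero_le_dist[of "cen b" a] by linarith
  then have "0 < \<eta>" using \<eta> by (simp add: \<eta>_def)
  then have "0 < (1 + E) * D" using zero_le_dist[of x a] unfolding \<eta>_def by linarith
  then have D: "0 < D" using E_pos by (simp add: zero_less_mult_iff)
  have "0 < \<eta> / (4 * (1 + E))" using \<open>0 < \<eta>\<close> E_pos by (simp add: add_pos_nonneg)
  then have lo: "max (D / 2) (D - \<eta> / (4 * (1 + E))) < D" using D by simp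
  have "0 \<le> max (D / 2) (D - \<eta> / (4 * (1 + E)))" using D by simp
  then obtain p e where pe: "max (D / 2) (D - \<eta> / (4 * (1 + E))) < real p / 2 ^ e" "real p / 2 ^ e < D"
    using dyadic_between[OF _ lo] by blast
  define sc where "sc = rtriple p 0 (2 ^ e - 1)"
  define s where "s = rval sc"
  have "s = real p / 2 ^ e" unfolding s_def sc_def by (rule rval_dyadic)
  then have "D / 2 < s" and s_lo: "D - \<eta> / (4 * (1 + E)) < s" and "s < D"
    using pe unfolding max_less_iff_conj by simp_all
  then have s: "0 < s" "s < D" using D by linarith+
  have "1 + E \<noteq> 0" using E_pos by linarith
  have "c * (D - \<eta> / (4 * c)) = c * D - \<eta> / 4" if "c \<noteq> 0" for c :: real
    using that by (simp add: field_simps)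
  from this[OF \<open>1 + E \<noteq> 0\<close>] have "(1 + E) * (D - \<eta> / (4 * (1 + E))) = (1 + E) * D - \<eta> / 4" .
  moreover have "(1 + E) * (D - \<eta> / (4 * (1 + E))) < (1 + E) * s"
    using s_lo E_pos by (intro mult_strict_left_mono) linarith+
  ultimately have s_hi: "(1 + E) * D - \<eta> / 4 < (1 + E) * s" by linarith
  obtain i where i: "(1/2::real) ^ i < min (\<eta> / 8) ((D - s) / 8)"
    using half_pow_lt[of "min (\<eta> / 8) ((D - s) / 8)"] \<open>0 < \<eta>\<close> s by auto
  then have "(1/2::real) ^ i < (D - s) / 8" by simp
  then obtain g M J where grid: "grid_cert s i g M J" using grid_cert_exists[OF s(1,2)] by blast
  have "dist (xq i) (cen b) \<le> (1/2) ^ i + (dist x a + rad b)"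
    using xq_close[of i] dist_triangle[of "xq i" "cen b" x] dist_triangle[of x "cen b" a] b
    by (simp add: dist_commute)
  also have "\<dots> \<le> (1 + E) * s - (1/2) ^ i - rad b"
  proof -
    obtain q where q: "(1/2::real) ^ i = q" by blast
    have "q < \<eta> / 8" "8 * rad b < \<eta>" "dist x a = (1 + E) * D - \<eta>"
      using i \<eta> unfolding q by (simp_all add: \<eta>_def)
    then show ?thesis using s_hi r unfolding q by linarith
  qed
  finally have "far_cert b i s g M J" using s grid by (simp add: far_cert_def)
  then show ?thesis unfolding s_def by blast
qed

lemma near_cert_exists:
  assumes "x \<in> A" and b: "dist (cen b) x < rad b / 8"
  shows "\<exists>i b' j'. near_cert b i b' j'"
proof -
  have r: "0 < rad b" using b zero_le_dist[of "cen b" x] by linarith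
  obtain i where i: "(1/2::real) ^ i < rad b / 16" using half_pow_lt[of "rad b / 16"] r by auto
  obtain e' where e': "(1/2::real) ^ e' < rad b / 16" using half_pow_lt[of "rad b / 16"] r by auto
  obtain b' where b': "rad b' = (1/2) ^ e'" "dist (cen b') x < rad b'"
    using basic_ball_code_exists[of "(1/2) ^ e'" e' x] by auto
  obtain j' where j': "P (4 * j' + 3) = Suc b'"
    using pos_ball_iff[of b'] assms(1) b'(2) by (auto simp: basic_ball_eq)
  obtain q where q: "(1/2::real) ^ i = q" by blast
  have "r / 4 \<le> r / (2 * (1 + e))" if "0 < r" "0 \<le> e" "e \<le> 1" for r e :: real
    using that by (intro frac_le) (simp_all add: algebra_simps)
  from this[OF r less_imp_le[OF E_pos] E_le_1] have "rad b / 4 \<le> rad b / (2 * (1 + E))" .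
  moreover have "dist (xq i) (cen b) \<le> q + dist (cen b) x" "dist (xq i) (cen b') \<le> q + dist (cen b') x"
    using xq_close[of i] dist_triangle[of "xq i" "cen b" x] dist_triangle[of "xq i" "cen b'" x]
      dist_commute[of x "cen b"] dist_commute[of x "cen b'"] unfolding q by linarith+
  moreover have "q < rad b / 16" "rad b' < rad b / 16" using i e' b'(1) unfolding q by simp_all
  ultimately have "near_cert b i b' j'"
    using r b b'(2) j' unfolding near_cert_def q by (intro conjI) linarith+
  then show ?thesis by blast
qed

lemma region_margin:
  assumes "p \<in> region st" "st = 1 \<or> 2 \<le> st"
  obtains \<mu> where "0 < \<mu>"
    "\<And>c r. dist c p + r \<le> \<mu> \<Longrightarrow> st = 1 \<or> 2 \<le> st \<and> dist c (cen (st - 2)) \<le> rad (st - 2) - r"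
proof (cases "st = 1")
  case True
  then show ?thesis using that[of 1] by simp
next
  case False
  let ?\<mu> = "rad (st - 2) - dist (cen (st - 2)) p"
  have "0 < ?\<mu>" using assms False by (simp add: region_def basic_ball_eq)
  moreover have "dist c (cen (st - 2)) \<le> rad (st - 2) - r" if "dist c p + r \<le> ?\<mu>" for c r
    using that dist_triangle2[of c "cen (st - 2)" p] by linarith
  ultimately show ?thesis using that assms(2) False by blast
qed

lemma chk_exists:
  assumes inv: "stage_inv st" and st: "st = 1 \<or> 2 \<le> st"
  shows "\<exists>t. chk CARD('n) Q P m st t"
proof -
  obtain p where p: "p \<in> A" "p \<in> region st" and far: "0 < D \<Longrightarrow> dist x p < (1 + E) * D"
    and near: "D = 0 \<Longrightarrow> p = x"
  proof (cases "0 < D")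
    case True then show ?thesis using inv that by (auto simp: stage_inv_def)
  next
    case False
    then have "D = 0" using infdist_nonneg[of x A] by simp
    then show ?thesis using inv that in_closed_iff_infdist_zero[OF A_closed ne, of x]
      by (auto simp: stage_inv_def)
  qed
  obtain \<mu> where \<mu>: "0 < \<mu>"
    "\<And>c r. dist c p + r \<le> \<mu> \<Longrightarrow> st = 1 \<or> 2 \<le> st \<and> dist c (cen (st - 2)) \<le> rad (st - 2) - r"
    using region_margin[OF p(2) st] by blast
  define \<kappa> where "\<kappa> = (if 0 < D then ((1 + E) * D - dist x p) / 8 else 1)"
  have "0 < \<kappa>" using far by (simp add: \<kappa>_def)
  then obtain e where e: "m \<le> e" "(1/2::real) ^ e < min (\<mu> / 2) \<kappa>"
    using half_pow_lt_ge[of "min (\<mu> / 2) \<kappa>" m] \<mu>(1) by auto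
  obtain b where b: "rad b = (1/2) ^ e" "dist (cen b) p < rad b / 8"
    using basic_ball_code_exists[of "(1/2) ^ e / 8" e p] by auto
  have bp: "dist (cen b) p < rad b" using b(2) zero_le_dist[of "cen b" p] by linarith
  then obtain j where j: "P (4 * j + 3) = Suc b"
    using pos_ball_iff[of b] p(1) by (auto simp: basic_ball_eq)
  have "rad b < \<mu> / 2" using e(2) b(1) by simp
  then have "dist (cen b) p + rad b \<le> \<mu>" using b(2) \<mu>(1) by linarith
  then have nested: "st = 1 \<or> 2 \<le> st \<and> dist (cen b) (cen (st - 2)) \<le> rad (st - 2) - rad b"
    using \<mu>(2) by blast
  have "(1/2::real) ^ e \<le> (1/2) ^ m" using e(1) by (rule power_decreasing) simp_all
  then have r: "0 < rad b" "rad b \<le> (1/2) ^ m" using b(1) by simp_all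
  show ?thesis
  proof (cases "0 < D")
    case True
    have "8 * rad b < (1 + E) * D - dist x p" using e b True by (simp add: \<kappa>_def)
    then obtain sc i g M J where far: "far_cert b i (rval sc) g M J"
      using far_cert_exists[OF bp] by blast
    define t where "t = list_encode [0, b, j, i, sc, g, M, J]"
    have fld: "fld t 0 = 0" "fld t 1 = b" "fld t 2 = j" "fld t 3 = i" "fld t 4 = sc"
      "fld t 5 = g" "fld t 6 = M" "fld t 7 = J"
      by (simp_all add: t_def del: list_encode.simps)
    have "chk_nested CARD('n) P m st t" unfolding chk_nested_iff fld using j nested r by blast
    then have "chk CARD('n) Q P m st t" unfolding chk_iff fld if_P[OF refl] using far by blast
    then show ?thesis by blast
  next
    case False
    then have "D = 0" using infdist_nonneg[of x A] by simp
    then obtain i b' j' where near_b: "near_cert b i b' j'"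
      using near_cert_exists[of b] near p(1) b(2) by auto
    define t where "t = list_encode [1, b, j, i, b', j']"
    have fld: "fld t 0 = 1" "fld t 1 = b" "fld t 2 = j" "fld t 3 = i" "fld t 4 = b'" "fld t 5 = j'"
      by (simp_all add: t_def del: list_encode.simps)
    have "chk_nested CARD('n) P m st t" unfolding chk_nested_iff fld using j nested r by blast
    then have "chk CARD('n) Q P m st t" unfolding chk_iff fld if_not_P[OF one_neq_zero] using near_b by blast
    then show ?thesis by blast
  qed
qed

definition stages :: "nat \<Rightarrow> nat" where "stages m = stage CARD('n) Q P m"

definition cert :: "nat \<Rightarrow> nat" where "cert m = (LEAST t. chk CARD('n) Q P m (stages m) t)"

definition ball_at :: "nat \<Rightarrow> nat" where "ball_at m = fld (cert m) 1"

lemma stages_0: "stages 0 = 1" and stages_Suc: "stages (Suc m) = Suc (Suc (ball_at m))"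
  by (simp_all add: stages_def cert_def ball_at_def)

lemma chk_cert_if_inv:
  assumes "stage_inv (stages m)" "stages m = 1 \<or> 2 \<le> stages m"
  shows "chk CARD('n) Q P m (stages m) (cert m)"
  unfolding cert_def using chk_exists[OF assms] by (rule LeastI_ex)

lemma stages_inv_chk: "stage_inv (stages m) \<and> chk CARD('n) Q P m (stages m) (cert m)"
proof (induction m)
  case 0
  then show ?case using stage_inv_1 chk_cert_if_inv[of 0] by (simp add: stages_0)
next
  case (Suc m)
  then have "stage_inv (stages (Suc m))"
    using stage_inv_chk[of m "stages m" "cert m"] unfolding stages_Suc ball_at_def by blast
  then show ?case using chk_cert_if_inv[of "Suc m"] by (simp add: stages_Suc)
qed

lemma chk_nested_cert: "chk_nested CARD('n) P m (stages m) (cert m)"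
  using stages_inv_chk[of m] by (simp add: chk_def)

lemma ball_at_props:
  "basic_ball (ball_at m) \<inter> A \<noteq> {}" "0 < rad (ball_at m)" "rad (ball_at m) \<le> (1/2) ^ m"
  using chk_nested_cert[of m] pos_ball_iff by (auto simp: chk_nested_iff ball_at_def)

lemma ball_at_nest:
  "dist (cen (ball_at (Suc m))) (cen (ball_at m)) \<le> rad (ball_at m) - rad (ball_at (Suc m))"
  using chk_nested_cert[of "Suc m"] unfolding chk_nested_iff stages_Suc ball_at_def[symmetric] by simp

lemma ball_at_chain:
  "n \<le> k \<Longrightarrow> dist (cen (ball_at n)) (cen (ball_at k)) \<le> rad (ball_at n) - rad (ball_at k)"
proof (induction k)
  case (Suc k)
  show ?case
  proof (cases "n = Suc k")
    case False
    then have "dist (cen (ball_at n)) (cen (ball_at k)) \<le> rad (ball_at n) - rad (ball_at k)"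
      using Suc by simp
    then show ?thesis
      using ball_at_nest[of k] dist_triangle2[of "cen (ball_at n)" "cen (ball_at (Suc k))" "cen (ball_at k)"]
      by linarith
  qed simp
qed simp

lemma ball_at_close:
  "n \<le> k \<Longrightarrow> dist (cen (ball_at n)) (cen (ball_at k)) \<le> (1/2) ^ n"
  using ball_at_chain[of n k] ball_at_props(2)[of k] ball_at_props(3)[of n] by linarith

lemma centres_Cauchy: "Cauchy (\<lambda>m. cen (ball_at m))"
proof (rule metric_CauchyI)
  fix e :: real assume "e > 0"
  then obtain N where N: "(1/2::real) ^ N < e / 2" using half_pow_lt[of "e/2"] by auto
  have "dist (cen (ball_at m)) (cen (ball_at n)) < e" if "m \<ge> N" "n \<ge> N" for m n
    using ball_at_close[OF that(1)] ball_at_close[OF that(2)] N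
      dist_triangle3[of "cen (ball_at m)" "cen (ball_at n)" "cen (ball_at N)"]
    by linarith
  then show "\<exists>M. \<forall>m\<ge>M. \<forall>n\<ge>M. dist (cen (ball_at m)) (cen (ball_at n)) < e" by blast
qed

definition y :: "real ^ 'n" where "y = lim (\<lambda>m. cen (ball_at m))"

lemma centres_tendsto: "(\<lambda>m. cen (ball_at m)) \<longlonglongrightarrow> y"
  unfolding y_def using centres_Cauchy by (simp add: Cauchy_convergent_iff convergent_LIMSEQ_iff)

lemma y_in_ball: "dist (cen (ball_at n)) y \<le> rad (ball_at n)"
proof (rule LIMSEQ_le_const2)
  show "(\<lambda>k. dist (cen (ball_at n)) (cen (ball_at k))) \<longlonglongrightarrow> dist (cen (ball_at n)) y"
    by (intro tendsto_intros centres_tendsto)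
  show "\<exists>N. \<forall>k\<ge>N. dist (cen (ball_at n)) (cen (ball_at k)) \<le> rad (ball_at n)"
  proof (intro exI allI impI)
    fix k assume "n \<le> k"
    then show "dist (cen (ball_at n)) (cen (ball_at k)) \<le> rad (ball_at n)"
      using ball_at_chain[of n k] ball_at_props(2)[of k] by linarith
  qed
qed

lemma y_in_A: "y \<in> A"
proof -
  have "infdist y A \<le> 0 + 2 * (1/2) ^ m" for m
  proof -
    obtain a where "a \<in> A" "a \<in> basic_ball (ball_at m)" using ball_at_props(1)[of m] by blast
    then have a: "a \<in> A" "dist (cen (ball_at m)) a < rad (ball_at m)" by (simp_all add: basic_ball_eq)
    then have "dist y a \<le> 2 * rad (ball_at m)"
      using y_in_ball[of m] dist_triangle[of y a "cen (ball_at m)"] by (simp add: dist_commute)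
    then show ?thesis using infdist_le[OF a(1), of y] ball_at_props(3)[of m] by linarith
  qed
  then have "infdist y A \<le> 0" by (rule le_if_le_plus_half_pow)
  then have "infdist y A = 0" using infdist_nonneg[of y A] by linarith
  then show ?thesis using in_closed_iff_infdist_zero[OF A_closed ne] by blast
qed

lemma dist_y: "dist x y \<le> (1 + E) * D"
proof (rule le_if_le_plus_half_pow)
  fix m
  have inv: "stage_inv (stages (Suc m))" using stages_inv_chk by blast
  have region: "region (stages (Suc m)) = ball (cen (ball_at m)) (rad (ball_at m))"
    by (simp add: region_def stages_Suc basic_ball_eq)
  obtain a where a: "dist (cen (ball_at m)) a < rad (ball_at m)" "dist x a \<le> (1 + E) * D"
  proof (cases "0 < D")
    case True
    then obtain a where "a \<in> region (stages (Suc m))" "dist x a < (1 + E) * D"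
      using inv by (auto simp: stage_inv_def)
    then show ?thesis using that region by simp
  next
    case False
    then have "D = 0" using infdist_nonneg[of x A] by simp
    then have "x \<in> region (stages (Suc m))" using inv by (simp add: stage_inv_def)
    then show ?thesis using that[of x] region \<open>D = 0\<close> by simp
  qed
  have "dist x y \<le> dist x a + dist a (cen (ball_at m)) + dist (cen (ball_at m)) y"
    using dist_triangle[of x y a] dist_triangle[of a y "cen (ball_at m)"] by linarith
  also have "\<dots> \<le> (1 + E) * D + 2 * rad (ball_at m)"
    using a y_in_ball[of m] by (simp add: dist_commute)
  also have "\<dots> \<le> (1 + E) * D + 2 * (1/2) ^ m" using ball_at_props(3)[of m] by simp
  finally show "dist x y \<le> (1 + E) * D + 2 * (1/2) ^ m" .
qed

lemma proj_machine_realizes: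
  "computes_on (proj_machine CARD('n) Q) P (\<lambda>n. ball_centre (ball_at n)) \<and>
   cauchy_rep (\<lambda>n. ball_centre (ball_at n)) y"
proof
  have "\<forall>m. \<exists>t. chk CARD('n) Q P m (stage CARD('n) Q P m) t"
    using stages_inv_chk unfolding stages_def by blast
  moreover have "stage CARD('n) Q P (Suc n) - 2 = ball_at n" for n
    using stages_Suc[of n] unfolding stages_def by simp
  ultimately show "computes_on (proj_machine CARD('n) Q) P (\<lambda>n. ball_centre (ball_at n))"
    using computes_proj_machine[of "CARD('n)" Q P] by simp
  show "cauchy_rep (\<lambda>n. ball_centre (ball_at n)) y"
    unfolding cauchy_rep_def using ball_at_close centres_tendsto by auto
qed

lemma y_in_eps_proj:
  assumes "1 / real Q \<le> \<epsilon>"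
  shows "y \<in> eps_proj \<epsilon> (x, A)"
proof -
  have "(1 + E) * D \<le> (1 + \<epsilon>) * D" using assms infdist_nonneg[of x A] by (intro mult_right_mono) auto
  then show ?thesis using y_in_A dist_y by (simp add: eps_proj_def)
qed

end

theorem theorem5p9:
  fixes \<epsilon> :: real
  assumes "\<epsilon> > 0"
  shows "computable_mv (pair_rep cauchy_rep closed_rep) (cauchy_rep :: (nat \<Rightarrow> nat) \<Rightarrow> real ^ 'n::finite \<Rightarrow> bool)
           (eps_proj_dom :: ((real ^ 'n) \<times> (real ^ 'n) set) set) (eps_proj \<epsilon>)"
proof -
  obtain n where n: "1 / real (Suc n) \<le> \<epsilon>"
    using reals_Archimedean[OF assms] by (auto simp: inverse_eq_divide intro: less_imp_le)
  have "\<exists>q z. computes_on (proj_machine CARD('n) (Suc n)) p q \<and> cauchy_rep q z \<and> z \<in> eps_proj \<epsilon> xA"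
    if "pair_rep cauchy_rep closed_rep p xA" "xA \<in> eps_proj_dom" for p and xA :: "(real ^ 'n) \<times> (real ^ 'n) set"
  proof -
    interpret proj_input p "fst xA" "snd xA" "Suc n"
      using that by unfold_locales (auto simp: pair_rep_def eps_proj_dom_def)
    show ?thesis using proj_machine_realizes y_in_eps_proj[OF n] by auto
  qed
  then show ?thesis unfolding computable_mv_def using total_recursive_proj_machine by blast
qed

end
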